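(* Let $d\ge2$, let $T:W\to\mathbb{CP}^d$ be a $1$-generic TCD map on a minimal BTB graph $G$, and let $H$ be a hyperplane generic with respect to $T$. Then every section $\sigma_H(T)$ is a TCD map on $\sigma(G)$: for every black vertex of $\sigma(G)$, the images under $\sigma_H(T)$ of its three white neighbours are pairwise distinct and lie on a line.
   Context: A BTB graph is a finite planar bipartite graph $G$ (black $B$, white $W$, faces $F$) in a closed disk or a cactus (a disk with some boundary white vertices identified by a noncrossing partition). It has boundary white vertices $w_1^\partial,\dots,w_n^\partial$ in clockwise order and every black vertex of degree $3$. It is minimal if zig-zag paths (turning maximally left at white and right at black vertices) are never closed, never traverse an edge twice, and no two both traverse two distinct edges $e_1$ then $e_2$. A TCD map is $T:W\to\mathbb{CP}^d$ such that the neighbours of each black vertex have pairwise distinct collinear images. $H$ is generic for $T$ if it contains no $T(w)$. $T$ is $1$-generic if (i) for every face $f$ and any three white vertices on its boundary, their images span a plane, and (ii) consecutive non-identified boundary white vertices have distinct images. Sections. $G^{\mathrm{int}}$ is $G$ with an added black vertex $b^\partial_{i,i+1}$ on the boundary between $w_i^\partial$ and $w_{i+1}^\partial$, joined to both. The star graph $\hat G$ has a white vertex $\hat w_b$ for each black vertex $b$ of $G^{\mathrm{int}}$ and a black vertex $\hat b_f$ in each face $f$ of $G^{\mathrm{int}}$, with an edge $\hat b_f\hat w_b$ when $b$ is on the boundary of $f$. If $w_i^\partial,w_{i+1}^\partial$ are identified, the leaf $\hat b_f$ of the face between them, $\hat w_{b^\partial_{i,i+1}}$ and their edge are removed. $\hat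 G$ is viewed in the original disk. Its faces correspond bijectively to white vertices of $G$. $\sigma(G)$ is obtained from $\hat G$ by replacing each black vertex of degree $>3$ by a bipartite tree with trivalent black vertices and degree-$2$ internal white vertices (keeping cyclic order), and then contracting every degree-$2$ black vertex (merging its two white neighbours). Write $\hat f_w$ for the face of $\sigma(G)$ corresponding to $w\in W$. $\sigma_H(T)(\hat w)=L(\hat w)\cap H$, where $L(\hat w)$ is the span of $\{T(w):\hat f_w\text{ incident to }\hat w\}$, a line by $1$-genericity. *)

theory Defs
  imports "HOL-Analysis.Analysis"
begin

section \<open>Combinatorial planar maps (rotation systems)\<close>

text \<open>A map is given by a finite set of darts (half-edges).  src d is the vertex at
which dart d starts, opp d is the other half of the same edge, and nxt d is the dart
following d in the clockwise cyclic order around src d.\<close>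

record ('v, 'd) bmap =
  verts  :: "'v set"
  blacks :: "'v set"
  darts  :: "'d set"
  src    :: "'d \<Rightarrow> 'v"
  opp    :: "'d \<Rightarrow> 'd"
  nxt    :: "'d \<Rightarrow> 'd"

definition whites :: "('v, 'd) bmap \<Rightarrow> 'v set" where
  "whites M = verts M - blacks M"

definition darts_at :: "('v, 'd) bmap \<Rightarrow> 'v \<Rightarrow> 'd set" where
  "darts_at M v = {d \<in> darts M. src M d = v}"

definition degree :: "('v, 'd) bmap \<Rightarrow> 'v \<Rightarrow> nat" where
  "degree M v = card (darts_at M v)"

text \<open>Face permutation: follow a dart and turn maximally left (clockwise-next dart
after the reversed dart).  Its orbits are the boundary walks of the faces.\<close>

definition phi :: "('v, 'd) bmap \<Rightarrow> 'd \<Rightarrow> 'd" where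
  "phi M d = nxt M (opp M d)"

definition face_orbit :: "('v, 'd) bmap \<Rightarrow> 'd \<Rightarrow> 'd set" where
  "face_orbit M d = {(phi M ^^ k) d | k. True}"

definition faces :: "('v, 'd) bmap \<Rightarrow> 'd set set" where
  "faces M = face_orbit M ` darts M"

definition edge_rel :: "('v, 'd) bmap \<Rightarrow> ('v \<times> 'v) set" where
  "edge_rel M = {(src M d, src M (opp M d)) | d. d \<in> darts M}"

text \<open>A connected bipartite map embedded in the sphere (genus 0, via Euler's formula).\<close>

definition plane_bip_map :: "('v, 'd) bmap \<Rightarrow> bool" where
  "plane_bip_map M \<longleftrightarrow>
     finite (verts M) \<and> finite (darts M) \<and> blacks M \<subseteq> verts M \<and>
     (\<forall>d\<in>darts M. src M d \<in> verts M \<and> opp M d \<in> darts M \<and> opp M d \<noteq> d \<and>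
                   opp M (opp M d) = d) \<and>
     (\<forall>d\<in>darts M. src M d \<in> blacks M \<longleftrightarrow> src M (opp M d) \<notin> blacks M) \<and>
     bij_betw (nxt M) (darts M) (darts M) \<and>
     (\<forall>d\<in>darts M. src M (nxt M d) = src M d) \<and>
     (\<forall>d\<in>darts M. \<forall>d'\<in>darts M. src M d = src M d' \<longrightarrow> (\<exists>k. (nxt M ^^ k) d = d')) \<and>
     (\<forall>u\<in>verts M. \<forall>v\<in>verts M. (u, v) \<in> (edge_rel M)\<^sup>*) \<and>
     int (card (verts M)) - int (card (darts M) div 2) + int (card (faces M)) = 2"

section \<open>BTB graphs, encoded through the graph G^int\<close>

text \<open>M is the graph G^int of a BTB graph G with n boundary white vertices
wb 0, ..., wb (n-1) (in clockwise order, possibly with repetitions in the cactus case),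
bb i being the added black vertex between wb i and wb ((i+1) mod n).  The dart a0 is the
dart from wb 0 to bb 0; the outer face (the complement of the disk/cactus) has boundary
walk wb 0, bb 0, wb 1, bb 1, ..., wb (n-1), bb (n-1).\<close>

definition btb_int :: "('v, 'd) bmap \<Rightarrow> nat \<Rightarrow> (nat \<Rightarrow> 'v) \<Rightarrow> (nat \<Rightarrow> 'v) \<Rightarrow> 'd \<Rightarrow> bool" where
  "btb_int M n wb bb a0 \<longleftrightarrow>
     plane_bip_map M \<and> n \<ge> 1 \<and> a0 \<in> darts M \<and>
     inj_on bb {..<n} \<and>
     (\<forall>i<n. wb i \<in> whites M \<and> bb i \<in> blacks M \<and> degree M (bb i) = 2 \<and>
            src M ((phi M ^^ (2*i)) a0) = wb i \<and>
            src M ((phi M ^^ (2*i+1)) a0) = bb i) \<and>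
     (phi M ^^ (2*n)) a0 = a0 \<and>
     (\<forall>b \<in> blacks M - bb ` {..<n}. degree M b = 3)"

definition outer_face :: "('v, 'd) bmap \<Rightarrow> 'd \<Rightarrow> 'd set" where
  "outer_face M a0 = face_orbit M a0"

text \<open>Faces of G (= inner faces of G^int) and the white vertices on their boundary.\<close>

definition inner_faces :: "('v, 'd) bmap \<Rightarrow> 'd \<Rightarrow> 'd set set" where
  "inner_faces M a0 = faces M - {outer_face M a0}"

definition face_whites :: "('v, 'd) bmap \<Rightarrow> 'd set \<Rightarrow> 'v set" where
  "face_whites M F = {src M d | d. d \<in> F \<and> src M d \<in> whites M}"

text \<open>The graph G itself: G^int without the added boundary black vertices.\<close>

definition G_blacks :: "('v, 'd) bmap \<Rightarrow> nat \<Rightarrow> (nat \<Rightarrow> 'v) \<Rightarrow> 'v set" where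
  "G_blacks M n bb = blacks M - bb ` {..<n}"

definition G_darts :: "('v, 'd) bmap \<Rightarrow> nat \<Rightarrow> (nat \<Rightarrow> 'v) \<Rightarrow> 'd set" where
  "G_darts M n bb = {d \<in> darts M. src M d \<notin> bb ` {..<n} \<and> src M (opp M d) \<notin> bb ` {..<n}}"

text \<open>zz_step: the (directed) zig-zag path traversing dart d next traverses dart d'.
At a white vertex it turns maximally left (clockwise-next dart); at a black vertex
maximally right (counterclockwise-next dart).  A path ends at a boundary white vertex
when the maximal left turn would cross the boundary of the disk (i.e. the next dart of
G^int goes to an added boundary black vertex).\<close>

definition zz_step :: "('v, 'd) bmap \<Rightarrow> nat \<Rightarrow> (nat \<Rightarrow> 'v) \<Rightarrow> ('d \<times> 'd) set" where
  "zz_step M n bb = {(d, d'). d \<in> G_darts M n bb \<and> d' \<in> G_darts M n bb \<and>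
      (src M (opp M d) \<in> whites M \<longrightarrow> d' = nxt M (opp M d)) \<and>
      (src M (opp M d) \<notin> whites M \<longrightarrow> nxt M d' = opp M d)}"

text \<open>Minimal: zig-zag paths are never closed, never traverse an edge twice, and no two
of them both traverse two distinct edges e1 then e2.  (Each edge is traversed by exactly
two zig-zag paths, one through each of its darts.)\<close>

definition minimal :: "('v, 'd) bmap \<Rightarrow> nat \<Rightarrow> (nat \<Rightarrow> 'v) \<Rightarrow> bool" where
  "minimal M n bb \<longleftrightarrow>
     (\<forall>d. (d, d) \<notin> (zz_step M n bb)\<^sup>+) \<and>
     (\<forall>d. (d, opp M d) \<notin> (zz_step M n bb)\<^sup>+) \<and>
     (\<forall>d1 d2. d2 \<noteq> d1 \<and> d2 \<noteq> opp M d1 \<and> (d1, d2) \<in> (zz_step M n bb)\<^sup>+ \<longrightarrow>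
              (opp M d1, opp M d2) \<notin> (zz_step M n bb)\<^sup>+)"

section \<open>Projective geometry in CP^d, d+1 = CARD('n)\<close>

text \<open>A point of CP^d is a 1-dimensional complex subspace of complex^'n, a line a
2-dimensional one, a plane a 3-dimensional one, a hyperplane one of dimension d.\<close>

definition ppoint :: "(complex ^ 'n) set \<Rightarrow> bool" where
  "ppoint P \<longleftrightarrow> vec.subspace P \<and> vec.dim P = 1"

definition pline :: "(complex ^ 'n) set \<Rightarrow> bool" where
  "pline L \<longleftrightarrow> vec.subspace L \<and> vec.dim L = 2"

definition hyperplane :: "(complex ^ 'n) set \<Rightarrow> bool" where
  "hyperplane H \<longleftrightarrow> vec.subspace H \<and> vec.dim H = CARD('n) - 1"

definition collinear3 :: "(complex ^ 'n) set \<Rightarrow> (complex ^ 'n) set \<Rightarrow> (complex ^ 'n) set \<Rightarrow> bool" where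
  "collinear3 P Q R \<longleftrightarrow> (\<exists>L. pline L \<and> P \<subseteq> L \<and> Q \<subseteq> L \<and> R \<subseteq> L)"

definition tcd_triple :: "(complex ^ 'n) set \<Rightarrow> (complex ^ 'n) set \<Rightarrow> (complex ^ 'n) set \<Rightarrow> bool" where
  "tcd_triple P Q R \<longleftrightarrow> ppoint P \<and> ppoint Q \<and> ppoint R \<and>
      P \<noteq> Q \<and> Q \<noteq> R \<and> P \<noteq> R \<and> collinear3 P Q R"

text \<open>TCD map on the BTB graph G (neighbours of a black vertex are counted via its three
darts, so multiple edges are counted with multiplicity).\<close>

definition tcd_map :: "('v, 'd) bmap \<Rightarrow> nat \<Rightarrow> (nat \<Rightarrow> 'v) \<Rightarrow> ('v \<Rightarrow> (complex ^ 'n) set) \<Rightarrow> bool" where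
  "tcd_map M n bb T \<longleftrightarrow>
     (\<forall>w\<in>whites M. ppoint (T w)) \<and>
     (\<forall>b\<in>G_blacks M n bb. \<forall>d1\<in>darts_at M b. \<forall>d2\<in>darts_at M b. \<forall>d3\<in>darts_at M b.
        d1 \<noteq> d2 \<and> d2 \<noteq> d3 \<and> d1 \<noteq> d3 \<longrightarrow>
        tcd_triple (T (src M (opp M d1))) (T (src M (opp M d2))) (T (src M (opp M d3))))"

definition one_generic :: "('v, 'd) bmap \<Rightarrow> nat \<Rightarrow> (nat \<Rightarrow> 'v) \<Rightarrow> 'd \<Rightarrow> ('v \<Rightarrow> (complex ^ 'n) set) \<Rightarrow> bool" where
  "one_generic M n wb a0 T \<longleftrightarrow>
     (\<forall>F\<in>inner_faces M a0. \<forall>u\<in>face_whites M F. \<forall>v\<in>face_whites M F. \<forall>w\<in>face_whites M F.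
        u \<noteq> v \<and> v \<noteq> w \<and> u \<noteq> w \<longrightarrow> vec.dim (vec.span (T u \<union> T v \<union> T w)) = 3) \<and>
     (\<forall>i<n. wb i \<noteq> wb (Suc i mod n) \<longrightarrow> T (wb i) \<noteq> T (wb (Suc i mod n)))"

definition generic_hyperplane :: "('v, 'd) bmap \<Rightarrow> ('v \<Rightarrow> (complex ^ 'n) set) \<Rightarrow> (complex ^ 'n) set \<Rightarrow> bool" where
  "generic_hyperplane M T H \<longleftrightarrow> hyperplane H \<and> (\<forall>w\<in>whites M. \<not> T w \<subseteq> H)"

text \<open>For an inner face F of G^int and a dart d0 in F starting at a black vertex, the
boundary of F reads fb d0 0, fw d0 0, fb d0 1, fw d0 1, ..., fb d0 (k-1), fw d0 (k-1)
with k = fdeg d0 the number of black (= white) corners of F.  The black vertex of the star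
graph in F has degree k, its neighbours being the white vertices for fb d0 j, and the
face of the star graph between the neighbours for fb d0 j and fb d0 (j+1) is the face
corresponding to fw d0 j.\<close>

definition fdeg :: "('v, 'd) bmap \<Rightarrow> 'd \<Rightarrow> nat" where
  "fdeg M d0 = card (face_orbit M d0) div 2"

definition fb :: "('v, 'd) bmap \<Rightarrow> 'd \<Rightarrow> nat \<Rightarrow> 'v" where
  "fb M d0 j = src M ((phi M ^^ (2*j)) d0)"

definition fw :: "('v, 'd) bmap \<Rightarrow> 'd \<Rightarrow> nat \<Rightarrow> 'v" where
  "fw M d0 j = src M ((phi M ^^ (2*j+1)) d0)"

definition face_starts :: "('v, 'd) bmap \<Rightarrow> 'd \<Rightarrow> 'd set" where
  "face_starts M a0 = {d0 \<in> darts M. d0 \<notin> outer_face M a0 \<and> src M d0 \<in> blacks M}"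

text \<open>Contraction of the degree-2 black vertices of the star graph merges the white
vertices of the star graph corresponding to the two black vertices on an inner face with
two black corners.  White vertices of the star graph are indexed by the black vertices of
G^int; merged vertices are the classes of the generated equivalence relation.\<close>

definition merge_rel :: "('v, 'd) bmap \<Rightarrow> 'd \<Rightarrow> ('v \<times> 'v) set" where
  "merge_rel M a0 = {(fb M d0 0, fb M d0 1) | d0. d0 \<in> face_starts M a0 \<and> fdeg M d0 = 2}"

definition white_nbrs :: "('v, 'd) bmap \<Rightarrow> 'v \<Rightarrow> 'v set" where
  "white_nbrs M b = {src M (opp M d) | d. d \<in> darts_at M b}"

text \<open>Set of white vertices w of G such that the face of sigma(G) corresponding to w is
incident to the (merged) white vertex of sigma(G) coming from the black vertex b of G^int.\<close>

definition merged_faces :: "('v, 'd) bmap \<Rightarrow> 'd \<Rightarrow> 'v \<Rightarrow> 'v set" where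
  "merged_faces M a0 b =
     (\<Union>b' \<in> {b'. (b, b') \<in> (merge_rel M a0 \<union> (merge_rel M a0)\<inverse>)\<^sup>*}. white_nbrs M b')"

text \<open>Bipartite trees with trivalent black vertices and degree-2 internal white vertices
whose leaves are the k neighbours (in cyclic order) correspond to triangulations of a
k-gon whose corners 0..k-1 are the k surrounding faces: tree black vertices are the
triangles, internal white vertices the diagonals, leaves the sides of the polygon.
tri i k A: A is a triangulation of the convex polygon with corners i, i+1, ..., k.\<close>

inductive tri :: "nat \<Rightarrow> nat \<Rightarrow> (nat \<times> nat \<times> nat) set \<Rightarrow> bool" where
  tri_edge: "tri i (Suc i) {}"
| tri_split: "i < j \<Longrightarrow> j < k \<Longrightarrow> tri i j A \<Longrightarrow> tri j k B \<Longrightarrow> tri i k (insert (i, j, k) (A \<union> B))"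

text \<open>A choice of trees for sigma(G): R contains exactly one starting dart for each inner
face with at least three black corners, and tc d0 is the chosen tree (triangulation) for
that face.  (Faces with three black corners have the unique triangulation.)\<close>

definition sigma_choice :: "('v, 'd) bmap \<Rightarrow> 'd \<Rightarrow> 'd set \<Rightarrow> ('d \<Rightarrow> (nat \<times> nat \<times> nat) set) \<Rightarrow> bool" where
  "sigma_choice M a0 R tc \<longleftrightarrow>
     R \<subseteq> face_starts M a0 \<and>
     (\<forall>d0\<in>R. fdeg M d0 \<ge> 3 \<and> tri 0 (fdeg M d0 - 1) (tc d0)) \<and>
     (\<forall>d\<in>face_starts M a0. fdeg M d \<ge> 3 \<longrightarrow> (\<exists>!d0\<in>R. d0 \<in> face_orbit M d))"

text \<open>The white vertex of sigma(G) adjacent to the tree black vertex (triangle) along the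
side (p, q), p < q, of the polygon of face d0, represented by the set of white vertices
w of G whose faces of sigma(G) are incident to it: a polygon side (p, p+1) resp.
(0, k-1) is the leaf for fb d0 (p+1) resp. fb d0 0 (after merging); a diagonal is an
internal white vertex of the tree, incident to the two faces for fw d0 p and fw d0 q.\<close>

definition side_faces :: "('v, 'd) bmap \<Rightarrow> 'd \<Rightarrow> 'd \<Rightarrow> nat \<Rightarrow> nat \<Rightarrow> 'v set" where
  "side_faces M a0 d0 p q =
     (if q = Suc p then merged_faces M a0 (fb M d0 q)
      else if p = 0 \<and> q = fdeg M d0 - 1 then merged_faces M a0 (fb M d0 0)
      else {fw M d0 p, fw M d0 q})"

text \<open>The section: sigma_H(T)(w^) = L(w^) \<inter> H, L(w^) the span of the incident images.\<close>

definition section_pt :: "('v \<Rightarrow> (complex ^ 'n) set) \<Rightarrow> (complex ^ 'n) set \<Rightarrow> 'v set \<Rightarrow> (complex ^ 'n) set" where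
  "section_pt T H S = vec.span (\<Union>w\<in>S. T w) \<inter> H"

end

theory Submission
  imports Defs
begin

text \<open>Let X_0, ..., X_(k-1) be the images under T of the white corners of an inner face f of
  G^int, k \<ge> 3. The three white vertices of \<sigma>(G) around a black vertex of \<sigma>(G) in f are
  sides or diagonals (p, q), (q, r), (p, r) of the k-gon, and each of them spans the corresponding
  line X_p X_q, ...: for a diagonal by definition; for a side it comes from a black corner of f,
  whose white neighbours are collinear by the TCD condition, and merging along faces with two
  black corners does not change that line.

  The white corners of f are pairwise distinct, because G is minimal: if f passed twice through a
  white vertex, splitting the vertex there would increase both the numbers of vertices and of
  faces, so by Euler's formula the map would fall apart, and the piece cut off from the boundary of
  the disk would trap a zig-zag path. Hence, by 1-genericity, X_p, X_q, X_r span a plane, and the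
  three lines joining them meet H in three distinct points of the line in which the plane meets H.\<close>


section \<open>Cycles of a permutation of a finite set\<close>

definition cycle_of :: "('a \<Rightarrow> 'a) \<Rightarrow> 'a \<Rightarrow> 'a set" where
  "cycle_of f x = {(f ^^ k) x | k. True}"

definition cycles_on :: "('a \<Rightarrow> 'a) \<Rightarrow> 'a set \<Rightarrow> 'a set set" where
  "cycles_on f D = cycle_of f ` D"

lemma funpow_closed: "f ` D \<subseteq> D \<Longrightarrow> x \<in> D \<Longrightarrow> (f ^^ k) x \<in> D"
  by (induction k) auto

lemma cycle_of_subset: "f ` D \<subseteq> D \<Longrightarrow> x \<in> D \<Longrightarrow> cycle_of f x \<subseteq> D"
  unfolding cycle_of_def by (auto intro: funpow_closed)

lemma self_in_cycle_of: "x \<in> cycle_of f x"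
  unfolding cycle_of_def by (auto intro: exI[of _ 0])

lemma funpow_in_cycle_of: "(f ^^ k) x \<in> cycle_of f x"
  unfolding cycle_of_def by auto

lemma cycle_of_subset_if_mem: "y \<in> cycle_of f x \<Longrightarrow> cycle_of f y \<subseteq> cycle_of f x"
  unfolding cycle_of_def by (auto simp flip: funpow_add o_apply[of "f ^^ _"])

lemma funpow_cong_on:
  assumes "\<And>d. d \<in> D \<Longrightarrow> f d = g d" "f ` D \<subseteq> D" "x \<in> D"
  shows "(f ^^ k) x = (g ^^ k) x"
  using assms by (induction k) (auto simp: funpow_closed)

lemma cycle_of_cong_on:
  assumes "\<And>d. d \<in> D \<Longrightarrow> f d = g d" "f ` D \<subseteq> D" "x \<in> D"
  shows "cycle_of f x = cycle_of g x"
  unfolding cycle_of_def using funpow_cong_on[OF assms] by auto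

lemma cycles_on_cong_on:
  assumes "\<And>d. d \<in> D \<Longrightarrow> f d = g d" "f ` D \<subseteq> D"
  shows "cycles_on f D = cycles_on g D"
  unfolding cycles_on_def using cycle_of_cong_on[OF assms] by (auto simp: image_def)

locale perm_on =
  fixes f :: "'a \<Rightarrow> 'a" and D :: "'a set"
  assumes finite_D: "finite D" and bij_D: "bij_betw f D D"
begin

lemma image_subset: "f ` D \<subseteq> D"
  using bij_D by (simp add: bij_betw_def)

lemma inj_on_funpow: "inj_on (f ^^ k) D"
proof (induction k)
  case (Suc k)
  have "inj_on (f \<circ> (f ^^ k)) D"
    using Suc bij_D funpow_closed[OF image_subset]
    by (intro comp_inj_on) (auto simp: bij_betw_def intro: inj_on_subset)
  then show ?case by (simp add: o_def)
qed simp

lemma funpow_cancel: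
  assumes "x \<in> D" "i \<le> j" "(f ^^ i) x = (f ^^ j) x"
  shows "(f ^^ (j - i)) x = x"
proof -
  have "(f ^^ i) ((f ^^ (j - i)) x) = (f ^^ i) x"
    using assms by (metis funpow_add le_add_diff_inverse o_apply)
  then show ?thesis
    using inj_on_funpow[of i] assms(1) funpow_closed[OF image_subset] by (meson inj_onD)
qed

lemma funpow_period_exists: assumes "x \<in> D" shows "\<exists>m>0. (f ^^ m) x = x"
proof -
  have "(\<lambda>k. (f ^^ k) x) ` {..card D} \<subseteq> D"
    using funpow_closed[OF image_subset assms] by auto
  then have "\<not> inj_on (\<lambda>k. (f ^^ k) x) {..card D}"
    using card_inj_on_le[of _ "{..card D}" D] finite_D by fastforce
  then obtain i j where "i < j" "(f ^^ i) x = (f ^^ j) x"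
    unfolding inj_on_def by (metis linorder_neqE_nat)
  then show ?thesis using funpow_cancel[OF assms] by (intro exI[of _ "j - i"]) auto
qed

definition period :: "'a \<Rightarrow> nat" where
  "period x = (LEAST m. 0 < m \<and> (f ^^ m) x = x)"

lemma period_pos: "x \<in> D \<Longrightarrow> 0 < period x"
  and funpow_period: "x \<in> D \<Longrightarrow> (f ^^ period x) x = x"
  using LeastI_ex[OF funpow_period_exists] unfolding period_def by auto

lemma funpow_neq_less_period: "0 < m \<Longrightarrow> m < period x \<Longrightarrow> (f ^^ m) x \<noteq> x"
  unfolding period_def using not_less_Least by blast

lemma funpow_mult_period: "x \<in> D \<Longrightarrow> (f ^^ (period x * c)) x = x"
  by (induction c) (simp_all add: funpow_add funpow_period)

lemma funpow_mod_period: assumes "x \<in> D" shows "(f ^^ k) x = (f ^^ (k mod period x)) x"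
proof -
  have "(f ^^ k) x = (f ^^ (k mod period x)) ((f ^^ (period x * (k div period x))) x)"
    by (metis funpow_add mod_mult_div_eq o_apply)
  then show ?thesis using funpow_mult_period[OF assms] by simp
qed

lemma inj_on_funpow_period: assumes "x \<in> D" shows "inj_on (\<lambda>i. (f ^^ i) x) {..<period x}"
proof -
  have "i = j" if "i \<le> j" "j < period x" "(f ^^ i) x = (f ^^ j) x" for i j
  proof (rule ccontr)
    assume "i \<noteq> j"
    then have "0 < j - i" "j - i < period x" using that by auto
    then show False
      using funpow_cancel[OF assms that(1,3)] funpow_neq_less_period by blast
  qed
  then show ?thesis
    by (intro inj_onI) (simp, metis nle_le)
qed

lemma cycle_of_eq_image_period:
  assumes "x \<in> D" shows "cycle_of f x = (\<lambda>i. (f ^^ i) x) ` {..<period x}"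
proof -
  have "(f ^^ k) x \<in> (\<lambda>i. (f ^^ i) x) ` {..<period x}" for k
    using funpow_mod_period[OF assms, of k] period_pos[OF assms]
    by (intro image_eqI[of _ _ "k mod period x"]) simp_all
  then show ?thesis unfolding cycle_of_def by auto
qed

lemma card_cycle_of: "x \<in> D \<Longrightarrow> card (cycle_of f x) = period x"
  by (simp add: cycle_of_eq_image_period inj_on_funpow_period card_image)

lemma mem_cycle_of_sym: assumes "x \<in> D" "y \<in> cycle_of f x" shows "x \<in> cycle_of f y"
proof -
  obtain k where k: "y = (f ^^ k) x" using assms(2) unfolding cycle_of_def by auto
  have "1 * Suc k \<le> period x * Suc k"
    using period_pos[OF assms(1)] by (intro mult_le_mono1) simp
  then have "period x * Suc k = (period x * Suc k - k) + k" by simp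
  then have "(f ^^ (period x * Suc k - k)) y = x"
    using funpow_mult_period[OF assms(1)] k by (metis (no_types) funpow_add o_apply)
  then show ?thesis by (metis funpow_in_cycle_of)
qed

lemma cycle_of_eq_if_mem: "x \<in> D \<Longrightarrow> y \<in> cycle_of f x \<Longrightarrow> cycle_of f y = cycle_of f x"
  by (meson cycle_of_subset_if_mem mem_cycle_of_sym subset_antisym)

lemma cycle_of_eq_if_mem_cycles_on: "P \<in> cycles_on f D \<Longrightarrow> x \<in> P \<Longrightarrow> P = cycle_of f x"
  unfolding cycles_on_def using cycle_of_eq_if_mem by fastforce

lemma finite_cycles_on: "finite (cycles_on f D)"
  unfolding cycles_on_def using finite_D by simp

end


section \<open>Composing a permutation with a transposition\<close>

context perm_on
begin

lemma perm_on_comp_transpose: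
  assumes "x \<in> D" "y \<in> D" shows "perm_on (f \<circ> Transposition.transpose x y) D"
  using assms finite_D by unfold_locales (auto intro: bij_betw_trans[OF _ bij_D])

lemma cycle_of_comp_transpose_other:
  assumes "z \<in> D" "cycle_of f z \<noteq> cycle_of f x" "cycle_of f z \<noteq> cycle_of f y"
  shows "cycle_of (f \<circ> Transposition.transpose x y) z = cycle_of f z"
proof -
  have "x \<notin> cycle_of f z" "y \<notin> cycle_of f z"
    using assms cycle_of_eq_if_mem by metis+
  then have "(f ^^ k) z \<noteq> x \<and> (f ^^ k) z \<noteq> y" for k
    using funpow_in_cycle_of by metis
  then have "((f \<circ> Transposition.transpose x y) ^^ k) z = (f ^^ k) z" for k
    by (induction k) auto
  then show ?thesis unfolding cycle_of_def by simp
qed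

lemma cycles_on_comp_transpose:
  assumes x: "x \<in> D" and y: "y \<in> D"
  defines "g \<equiv> f \<circ> Transposition.transpose x y"
  shows "cycles_on g D =
    (cycles_on f D - {cycle_of f x, cycle_of f y}) \<union> {cycle_of g x, cycle_of g y}"
proof (intro equalityI subsetI)
  interpret g: perm_on g D unfolding g_def using perm_on_comp_transpose[OF x y] .
  have f_eq: "f = g \<circ> Transposition.transpose x y" unfolding g_def by (simp add: comp_assoc)
  fix P assume "P \<in> cycles_on g D"
  then obtain z where z: "z \<in> D" "P = cycle_of g z" unfolding cycles_on_def by auto
  show "P \<in> (cycles_on f D - {cycle_of f x, cycle_of f y}) \<union> {cycle_of g x, cycle_of g y}"
  proof (cases "P \<in> {cycle_of g x, cycle_of g y}")
    case False
    then have "P = cycle_of f z"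
      using g.cycle_of_comp_transpose_other[OF z(1)] z(2) f_eq by auto
    moreover have "x \<notin> P" "y \<notin> P" using False z g.cycle_of_eq_if_mem by auto
    then have "P \<noteq> cycle_of f x" "P \<noteq> cycle_of f y" using self_in_cycle_of by metis+
    ultimately show ?thesis using z(1) unfolding cycles_on_def by auto
  qed auto
next
  fix P
  assume P: "P \<in> (cycles_on f D - {cycle_of f x, cycle_of f y}) \<union> {cycle_of g x, cycle_of g y}"
  show "P \<in> cycles_on g D"
  proof (cases "P \<in> {cycle_of g x, cycle_of g y}")
    case False
    then obtain z where "z \<in> D" "P = cycle_of f z" "P \<noteq> cycle_of f x" "P \<noteq> cycle_of f y"
      using P unfolding cycles_on_def by auto
    then show ?thesis
      using cycle_of_comp_transpose_other[of z x y] unfolding g_def cycles_on_def by auto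
  qed (use x y in \<open>auto simp: cycles_on_def\<close>)
qed

lemma cycle_of_comp_transpose_separates:
  assumes x: "x \<in> D" and xy: "x \<noteq> y" and y: "y \<in> cycle_of f x"
  shows "y \<notin> cycle_of (f \<circ> Transposition.transpose x y) x"
proof -
  define p where "p = period x"
  obtain a where a: "a < p" "y = (f ^^ a) x"
    using y cycle_of_eq_image_period[OF x] p_def by auto
  have "a \<noteq> 0" using a xy by (metis funpow_0)
  have p: "0 < p" "(f ^^ p) x = x" using period_pos[OF x] funpow_period[OF x] p_def by auto
  have inj: "i = j" if "i < p" "j < p" "(f ^^ i) x = (f ^^ j) x" for i j
    using inj_on_funpow_period[OF x] that p_def by (auto dest: inj_onD)
  \<comment> \<open>The points of the cycle of x strictly after y, up to x itself, are closed under the new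
    permutation.\<close>
  define C where "C = (\<lambda>i. (f ^^ i) x) ` {a<..p}"
  have "(f \<circ> Transposition.transpose x y) z \<in> C" if "z \<in> C" for z
  proof -
    obtain i where i: "a < i" "i \<le> p" "z = (f ^^ i) x" using \<open>z \<in> C\<close> C_def by auto
    show ?thesis
    proof (cases "i = p")
      case True
      then have "(f \<circ> Transposition.transpose x y) z = (f ^^ Suc a) x" using i p a by simp
      then show ?thesis using a unfolding C_def by (intro image_eqI[of _ _ "Suc a"]) auto
    next
      case False
      then have "z \<noteq> x" using funpow_neq_less_period i p_def by auto
      moreover have "z \<noteq> y" using inj[of i a] i a False by auto
      ultimately show ?thesis using i False C_def by (auto intro!: image_eqI[of _ _ "Suc i"])
    qed
  qed
  moreover have "x \<in> C" using p a C_def by (auto intro!: image_eqI[of _ _ p])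
  ultimately have "cycle_of (f \<circ> Transposition.transpose x y) x \<subseteq> C"
    by (intro cycle_of_subset) auto
  moreover have "y \<notin> C"
  proof
    assume "y \<in> C"
    then obtain j where j: "a < j" "j \<le> p" "y = (f ^^ j) x" using C_def by auto
    show False
      using inj[of a j] j a p xy by (cases "j = p") auto
  qed
  ultimately show ?thesis by blast
qed

lemma cycle_of_comp_transpose_joins:
  assumes x: "x \<in> D" and y: "y \<in> D" and xy: "y \<notin> cycle_of f x"
  shows "y \<in> cycle_of (f \<circ> Transposition.transpose x y) x"
proof -
  have "x \<notin> cycle_of f y" using xy mem_cycle_of_sym[OF y] by blast
  then have "x \<noteq> y" using self_in_cycle_of by metis
  have "((f \<circ> Transposition.transpose x y) ^^ j) x = (f ^^ j) y" if "0 < j" "j \<le> period y" for j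
    using that
  proof (induction j)
    case (Suc j)
    show ?case
    proof (cases "j = 0")
      case False
      have "(f ^^ j) y \<noteq> y" using funpow_neq_less_period[of j y] Suc.prems False by simp
      moreover have "(f ^^ j) y \<noteq> x" using \<open>x \<notin> cycle_of f y\<close> funpow_in_cycle_of by metis
      ultimately show ?thesis using Suc False by simp
    qed (simp add: \<open>x \<noteq> y\<close>)
  qed simp
  then have "((f \<circ> Transposition.transpose x y) ^^ period y) x = y"
    using funpow_period[OF y] period_pos[OF y] by simp
  then show ?thesis by (metis funpow_in_cycle_of)
qed

lemma not_mem_cycles_on_if_mem:
  assumes "x \<in> P" "P \<noteq> cycle_of f x" shows "P \<notin> cycles_on f D"
  using assms cycle_of_eq_if_mem_cycles_on by blast

lemma card_cycles_on_comp_transpose_split: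
  assumes x: "x \<in> D" and y: "y \<in> D" and xy: "x \<noteq> y" and y_cycle: "y \<in> cycle_of f x"
  shows "card (cycles_on (f \<circ> Transposition.transpose x y) D) = card (cycles_on f D) + 1"
proof -
  define g where "g = f \<circ> Transposition.transpose x y"
  have fy: "cycle_of f y = cycle_of f x" using cycle_of_eq_if_mem[OF x y_cycle] .
  then have eq: "cycles_on g D =
      insert (cycle_of g x) (insert (cycle_of g y) (cycles_on f D - {cycle_of f x}))"
    using cycles_on_comp_transpose[OF x y] unfolding g_def by simp
  have "y \<notin> cycle_of g x" unfolding g_def
    by (rule cycle_of_comp_transpose_separates[OF x xy y_cycle])
  then have "cycle_of g x \<noteq> cycle_of g y" using self_in_cycle_of[of y g] by auto
  moreover have "cycle_of g x \<notin> cycles_on f D - {cycle_of f x}"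
    using not_mem_cycles_on_if_mem[OF self_in_cycle_of[of x g]] by auto
  moreover have "cycle_of g y \<notin> cycles_on f D - {cycle_of f x}"
    using not_mem_cycles_on_if_mem[OF self_in_cycle_of[of y g]] fy by auto
  ultimately have "card (cycles_on g D) = Suc (Suc (card (cycles_on f D - {cycle_of f x})))"
    unfolding eq using finite_cycles_on by simp
  moreover have "cycle_of f x \<in> cycles_on f D" using x unfolding cycles_on_def by simp
  moreover have "card (cycles_on f D) > 0" using calculation(2) finite_cycles_on card_gt_0_iff
    by blast
  ultimately show ?thesis unfolding g_def by (simp add: card_Diff_singleton)
qed

lemma card_cycles_on_comp_transpose_merge:
  assumes x: "x \<in> D" and y: "y \<in> D" and y_cycle: "y \<notin> cycle_of f x"
  shows "card (cycles_on (f \<circ> Transposition.transpose x y) D) + 1 = card (cycles_on f D)"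
proof -
  define g where "g = f \<circ> Transposition.transpose x y"
  interpret g: perm_on g D unfolding g_def using perm_on_comp_transpose[OF x y] .
  have "y \<in> cycle_of g x" unfolding g_def by (rule cycle_of_comp_transpose_joins[OF assms])
  then have "cycle_of g y = cycle_of g x" by (rule g.cycle_of_eq_if_mem[OF x])
  then have eq:
      "cycles_on g D = insert (cycle_of g x) (cycles_on f D - {cycle_of f x, cycle_of f y})"
    using cycles_on_comp_transpose[OF x y] unfolding g_def by simp
  have "cycle_of g x \<notin> cycles_on f D - {cycle_of f x, cycle_of f y}"
    using not_mem_cycles_on_if_mem[OF self_in_cycle_of[of x g]] by auto
  then have "card (cycles_on g D) = Suc (card (cycles_on f D - {cycle_of f x, cycle_of f y}))"
    unfolding eq using finite_cycles_on by simp
  moreover have "{cycle_of f x, cycle_of f y} \<subseteq> cycles_on f D"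
    using x y unfolding cycles_on_def by simp
  moreover have "cycle_of f x \<noteq> cycle_of f y" using y_cycle self_in_cycle_of[of y f] by auto
  then have "card {cycle_of f x, cycle_of f y} = 2" by simp
  moreover have "card {cycle_of f x, cycle_of f y} \<le> card (cycles_on f D)"
    using calculation(2) finite_cycles_on by (rule card_mono[rotated])
  ultimately show ?thesis unfolding g_def by (simp add: card_Diff_subset)
qed

lemma card_nonfixed_comp_transpose_less:
  assumes x: "x \<in> D" and fx: "f x \<noteq> x"
  shows "card {d \<in> D. (f \<circ> Transposition.transpose x (f x)) d \<noteq> d} < card {d \<in> D. f d \<noteq> d}"
proof (rule psubset_card_mono)
  let ?g = "f \<circ> Transposition.transpose x (f x)"
  have "?g (f x) = f x" by simp
  then have "f d \<noteq> d" if "?g d \<noteq> d" for d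
    using that fx by (cases "d = x"; cases "d = f x") auto
  then have "{d \<in> D. ?g d \<noteq> d} \<subseteq> {d \<in> D. f d \<noteq> d}" by auto
  moreover have "f x \<in> D" using image_subset x by auto
  moreover have "f (f x) \<noteq> f x"
    using inj_onD[of f D "f x" x] bij_D x \<open>f x \<in> D\<close> fx by (auto simp: bij_betw_def)
  ultimately show "{d \<in> D. ?g d \<noteq> d} \<subset> {d \<in> D. f d \<noteq> d}"
    using \<open>?g (f x) = f x\<close> by blast
qed (simp add: finite_D)

end


section \<open>An Euler-type bound for rotation systems\<close>

definition dart_graph :: "('a \<Rightarrow> 'a) \<Rightarrow> ('a \<Rightarrow> 'a) \<Rightarrow> 'a set \<Rightarrow> 'a rel" where
  "dart_graph s a D = {(d, a d) | d. d \<in> D} \<union> {(d, s d) | d. d \<in> D} \<union> {(s d, d) | d. d \<in> D}"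

definition components_on :: "'a rel \<Rightarrow> 'a set \<Rightarrow> 'a set set" where
  "components_on R D = (\<lambda>d. R\<^sup>* `` {d}) ` D"

lemma rtrancl_closed:
  assumes "R \<subseteq> D \<times> D" "(d, e) \<in> R\<^sup>*" "d \<in> D" shows "e \<in> D"
proof -
  have "R\<^sup>* `` D = D" using assms(1) by (intro Image_closed_trancl) blast
  then show ?thesis using assms(2,3) by blast
qed

lemma rtrancl_insert_edge_cases:
  assumes "sym R" and "(u, v) \<in> (R \<union> {(x, y), (y, x)})\<^sup>*"
  shows "(u, v) \<in> R\<^sup>* \<or> (u, x) \<in> R\<^sup>* \<and> (y, v) \<in> R\<^sup>* \<or> (u, y) \<in> R\<^sup>* \<and> (x, v) \<in> R\<^sup>*"
  using assms(2)
proof (induction rule: rtrancl_induct)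
  case (step v w)
  have sym: "(q, p) \<in> R\<^sup>*" if "(p, q) \<in> R\<^sup>*" for p q
    using symD[OF sym_rtrancl[OF assms(1)] that] .
  from step.hyps(2) consider "(v, w) \<in> R" | "v = x" "w = y" | "v = y" "w = x" by blast
  then show ?case
    by cases
      (use step.IH sym in \<open>meson rtrancl.rtrancl_into_rtrancl rtrancl.rtrancl_refl rtrancl_trans\<close>)+
qed simp

lemma Image_rtrancl_insert_edge:
  assumes "sym R"
  shows "(R \<union> {(x, y), (y, x)})\<^sup>* `` {x} = R\<^sup>* `` {x} \<union> R\<^sup>* `` {y}"
proof
  have "R\<^sup>* \<subseteq> (R \<union> {(x, y), (y, x)})\<^sup>*" by (rule rtrancl_mono) blast
  moreover have "(x, y) \<in> (R \<union> {(x, y), (y, x)})\<^sup>*" by blast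
  ultimately show "R\<^sup>* `` {x} \<union> R\<^sup>* `` {y} \<subseteq> (R \<union> {(x, y), (y, x)})\<^sup>* `` {x}"
    by (auto intro: rtrancl_trans)
  show "(R \<union> {(x, y), (y, x)})\<^sup>* `` {x} \<subseteq> R\<^sup>* `` {x} \<union> R\<^sup>* `` {y}"
    using rtrancl_insert_edge_cases[OF assms] symD[OF sym_rtrancl[OF assms]] by blast
qed

lemma Image_rtrancl_insert_edge_other:
  assumes "sym R" and "u \<notin> R\<^sup>* `` {x} \<union> R\<^sup>* `` {y}"
  shows "(R \<union> {(x, y), (y, x)})\<^sup>* `` {u} = R\<^sup>* `` {u}"
proof
  show "R\<^sup>* `` {u} \<subseteq> (R \<union> {(x, y), (y, x)})\<^sup>* `` {u}"
    using rtrancl_mono[of R "R \<union> {(x, y), (y, x)}"] by auto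
  show "(R \<union> {(x, y), (y, x)})\<^sup>* `` {u} \<subseteq> R\<^sup>* `` {u}"
    using rtrancl_insert_edge_cases[OF assms(1)] symD[OF sym_rtrancl[OF assms(1)]] assms(2)
    by blast
qed

lemma Image_rtrancl_eq_if_sym:
  assumes "sym R" "(v, u) \<in> R\<^sup>*" shows "R\<^sup>* `` {u} = R\<^sup>* `` {v}"
  using rtrancl_trans[OF assms(2)] rtrancl_trans[OF symD[OF sym_rtrancl[OF assms(1)] assms(2)]]
  by blast

lemma card_components_on_le_insert_edge:
  assumes "finite D" and "sym R" and "x \<in> D" and "y \<in> D"
  shows "card (components_on R D) \<le> card (components_on (R \<union> {(x, y), (y, x)}) D) + 1"
proof -
  let ?R' = "R \<union> {(x, y), (y, x)}" and ?c = "\<lambda>u. R\<^sup>* `` {u}"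
  let ?U = "?c x \<union> ?c y" and ?C' = "components_on ?R' D"
  have U: "?U \<in> ?C'"
    using Image_rtrancl_insert_edge[OF assms(2)] assms(3) unfolding components_on_def by force
  have "components_on R D \<subseteq> insert (?c x) (insert (?c y) (?C' - {?U}))"
  proof
    fix P assume "P \<in> components_on R D"
    then obtain u where u: "u \<in> D" "P = ?c u" unfolding components_on_def by auto
    show "P \<in> insert (?c x) (insert (?c y) (?C' - {?U}))"
    proof (cases "u \<in> ?U")
      case True
      then have "?c u = ?c x \<or> ?c u = ?c y"
        using Image_rtrancl_eq_if_sym[OF assms(2)] by blast
      then show ?thesis using u by auto
    next
      case False
      then have "?c u \<noteq> ?U" by auto
      then show ?thesis
        using Image_rtrancl_insert_edge_other[OF assms(2) False] u unfolding components_on_def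
        by auto
    qed
  qed
  moreover have "finite ?C'" using assms(1) unfolding components_on_def by simp
  moreover have "card (insert (?c x) (insert (?c y) (?C' - {?U}))) \<le> card (?C' - {?U}) + 2"
    using \<open>finite ?C'\<close> by (simp add: card_insert_if)
  ultimately have "card (components_on R D) \<le> card (?C' - {?U}) + 2"
    by (meson card_mono finite_Diff finite_insert le_trans)
  then show ?thesis using U \<open>finite ?C'\<close> card_Diff1_less[of ?C' ?U] by simp
qed

lemma rtrancl_insert_edge_if_connected:
  assumes "sym R" and "(x, y) \<in> R\<^sup>*"
  shows "(R \<union> {(x, y), (y, x)})\<^sup>* = R\<^sup>*"
proof
  have "R \<union> {(x, y), (y, x)} \<subseteq> R\<^sup>*" using assms symD[OF sym_rtrancl[OF assms(1)]] by blast
  then show "(R \<union> {(x, y), (y, x)})\<^sup>* \<subseteq> R\<^sup>*" by (rule rtrancl_subset_rtrancl)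
  show "R\<^sup>* \<subseteq> (R \<union> {(x, y), (y, x)})\<^sup>*" by (rule rtrancl_mono) blast
qed

lemma dart_graph_subset_comp_transpose:
  assumes "x \<in> D" "y \<in> D"
  shows "dart_graph s a D \<subseteq>
    (dart_graph (s \<circ> Transposition.transpose x y) a D \<union> {(x, y), (y, x)})\<^sup>*"
proof -
  let ?s' = "s \<circ> Transposition.transpose x y"
  let ?R = "dart_graph ?s' a D \<union> {(x, y), (y, x)}"
  have edge: "(d, ?s' d) \<in> ?R" "(?s' d, d) \<in> ?R" if "d \<in> D" for d
    using that unfolding dart_graph_def by blast+
  have xy: "(x, y) \<in> ?R" "(y, x) \<in> ?R" by simp_all
  have "(d, s d) \<in> ?R\<^sup>* \<and> (s d, d) \<in> ?R\<^sup>*" if "d \<in> D" for d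
  proof -
    consider "d = x" | "d = y" | "d \<noteq> x" "d \<noteq> y" by blast
    then show ?thesis
    proof cases
      case 1
      have "(y, s x) \<in> ?R" "(s x, y) \<in> ?R" using edge[OF assms(2)] by simp_all
      then show ?thesis
        using 1 xy by (blast intro: converse_rtrancl_into_rtrancl)
    next
      case 2
      have "(x, s y) \<in> ?R" "(s y, x) \<in> ?R" using edge[OF assms(1)] by simp_all
      then show ?thesis
        using 2 xy by (blast intro: converse_rtrancl_into_rtrancl)
    next
      case 3
      then show ?thesis using edge[OF that] by (simp add: r_into_rtrancl)
    qed
  qed
  moreover have "(d, a d) \<in> ?R" if "d \<in> D" for d
    using that unfolding dart_graph_def by blast
  ultimately show ?thesis unfolding dart_graph_def by blast
qed

lemma rtrancl_dart_graph_comp_transpose: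
  assumes "x \<in> D" "y \<in> D"
  shows "(dart_graph (s \<circ> Transposition.transpose x y) a D \<union> {(x, y), (y, x)})\<^sup>* =
    (dart_graph s a D \<union> {(x, y), (y, x)})\<^sup>*"
proof -
  have "s \<circ> Transposition.transpose x y \<circ> Transposition.transpose x y = s"
    by (simp add: comp_assoc)
  then have "dart_graph (s \<circ> Transposition.transpose x y) a D \<subseteq>
      (dart_graph s a D \<union> {(x, y), (y, x)})\<^sup>*"
    using dart_graph_subset_comp_transpose[OF assms, of "s \<circ> Transposition.transpose x y" a] by simp
  with dart_graph_subset_comp_transpose[OF assms, of s a] show ?thesis
    by (intro equalityI rtrancl_subset_rtrancl) (auto intro: rtrancl_mono[THEN subsetD])
qed

locale fpf_involution =
  fixes a :: "'a \<Rightarrow> 'a" and D :: "'a set"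
  assumes finite_D: "finite D"
    and involution: "\<And>d. d \<in> D \<Longrightarrow> a d \<in> D \<and> a d \<noteq> d \<and> a (a d) = d"
begin

lemma perm_on_comp: "bij_betw s D D \<Longrightarrow> perm_on (s \<circ> a) D"
proof
  have "bij_betw a D D" by (rule bij_betw_byWitness[of _ a]) (use involution in auto)
  then show "bij_betw s D D \<Longrightarrow> bij_betw (s \<circ> a) D D" by (rule bij_betw_trans)
qed (rule finite_D)

lemma sym_dart_graph: "sym (dart_graph s a D)"
proof (rule symI)
  fix u v assume "(u, v) \<in> dart_graph s a D"
  then consider d where "d \<in> D" "u = d" "v = a d" | d where "d \<in> D" "u = d" "v = s d"
    | d where "d \<in> D" "u = s d" "v = d" unfolding dart_graph_def by blast
  then show "(v, u) \<in> dart_graph s a D"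
  proof cases
    case (1 d)
    then have "(a d, a (a d)) \<in> dart_graph s a D" using involution unfolding dart_graph_def by blast
    then show ?thesis using 1 involution by simp
  qed (auto simp: dart_graph_def)
qed

lemma dart_graph_subset: "s ` D \<subseteq> D \<Longrightarrow> dart_graph s a D \<subseteq> D \<times> D"
  unfolding dart_graph_def using involution by auto

lemma rtrancl_dart_graph_if_mem_vertex_cycle:
  assumes "s ` D \<subseteq> D" "w \<in> D" "z \<in> cycle_of s w"
  shows "(w, z) \<in> (dart_graph s a D)\<^sup>*"
proof -
  have "(s ^^ k) w \<in> D \<and> (w, (s ^^ k) w) \<in> (dart_graph s a D)\<^sup>*" for k
  proof (induction k)
    case (Suc k)
    define u where "u = (s ^^ k) w"
    have "u \<in> D" "(w, u) \<in> (dart_graph s a D)\<^sup>*" using Suc.IH u_def by blast+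
    moreover have "(u, s u) \<in> dart_graph s a D" using \<open>u \<in> D\<close> unfolding dart_graph_def by blast
    ultimately have "(w, s u) \<in> (dart_graph s a D)\<^sup>*" "s u \<in> D"
      using assms(1) by (auto intro: rtrancl.rtrancl_into_rtrancl)
    then show ?case unfolding u_def by simp
  qed (simp add: assms(2))
  then show ?thesis using assms(3) unfolding cycle_of_def by auto
qed

lemma rtrancl_dart_graph_if_mem_face_cycle:
  assumes "s ` D \<subseteq> D" "w \<in> D" "z \<in> cycle_of (s \<circ> a) w"
  shows "(w, z) \<in> (dart_graph s a D)\<^sup>*"
proof -
  define g where "g = s \<circ> a"
  have "(g ^^ k) w \<in> D \<and> (w, (g ^^ k) w) \<in> (dart_graph s a D)\<^sup>*" for k
  proof (induction k)
    case (Suc k)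
    define u where "u = (g ^^ k) w"
    have "u \<in> D" "(w, u) \<in> (dart_graph s a D)\<^sup>*" using Suc.IH u_def by blast+
    then have "a u \<in> D" "s (a u) \<in> D" using involution assms(1) by auto
    then have "(u, a u) \<in> dart_graph s a D" "(a u, s (a u)) \<in> dart_graph s a D"
      using \<open>u \<in> D\<close> unfolding dart_graph_def by blast+
    then have "(w, s (a u)) \<in> (dart_graph s a D)\<^sup>*"
      using \<open>(w, u) \<in> (dart_graph s a D)\<^sup>*\<close> by (meson rtrancl_into_rtrancl)
    moreover have "(g ^^ Suc k) w = s (a u)" unfolding u_def g_def by simp
    ultimately show ?case using \<open>s (a u) \<in> D\<close> by simp
  qed (simp add: assms(2))
  then show ?thesis using assms(3) unfolding cycle_of_def g_def by auto
qed

lemma rtrancl_dart_graph_if_face_joined: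
  assumes "s ` D \<subseteq> D" "x \<in> D" "y \<in> D" "a y \<in> cycle_of (s \<circ> a) (a x)"
  shows "(x, y) \<in> (dart_graph s a D)\<^sup>*"
proof -
  have "(a x, a y) \<in> (dart_graph s a D)\<^sup>*"
    using rtrancl_dart_graph_if_mem_face_cycle[OF assms(1) _ assms(4)] involution assms(2) by blast
  moreover have "(x, a x) \<in> dart_graph s a D" "(a y, a (a y)) \<in> dart_graph s a D"
    using assms(2,3) involution unfolding dart_graph_def by blast+
  ultimately show ?thesis
    using involution[OF assms(3)]
    by (metis converse_rtrancl_into_rtrancl rtrancl.rtrancl_into_rtrancl)
qed

lemma rtrancl_dart_graph_comp_transpose_succ:
  assumes "x \<in> D" "s x \<in> D"
  shows "(dart_graph (s \<circ> Transposition.transpose x (s x)) a D \<union> {(x, s x), (s x, x)})\<^sup>* =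
    (dart_graph s a D)\<^sup>*"
proof -
  have "(x, s x) \<in> (dart_graph s a D)\<^sup>*" using assms(1) unfolding dart_graph_def by blast
  then show ?thesis
    using rtrancl_dart_graph_comp_transpose[OF assms]
      rtrancl_insert_edge_if_connected[OF sym_dart_graph]
    by simp
qed

lemma comp_transpose_comp_eq:
  assumes "x \<in> D" "y \<in> D" "d \<in> D"
  shows "(s \<circ> Transposition.transpose x y \<circ> a) d = (s \<circ> a \<circ> Transposition.transpose (a x) (a y)) d"
proof -
  have a: "a (a x) = x" "a (a y) = y" "a (a d) = d"
    using involution assms by auto
  consider "d = a x" | "d = a y" | "a d \<noteq> x" "a d \<noteq> y" "d \<noteq> a x" "d \<noteq> a y"
    using a by metis
  then have "Transposition.transpose x y (a d) = a (Transposition.transpose (a x) (a y) d)"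
    by cases (simp_all add: a)
  then show ?thesis by simp
qed

lemma
  assumes "bij_betw s D D" "x \<in> D" "y \<in> D"
  shows cycle_of_comp_transpose_comp: "z \<in> D \<Longrightarrow> cycle_of (s \<circ> Transposition.transpose x y \<circ> a) z =
      cycle_of (s \<circ> a \<circ> Transposition.transpose (a x) (a y)) z"
    and cycles_on_comp_transpose_comp: "cycles_on (s \<circ> Transposition.transpose x y \<circ> a) D =
      cycles_on (s \<circ> a \<circ> Transposition.transpose (a x) (a y)) D"
proof -
  interpret S: perm_on s D using finite_D assms(1) by unfold_locales
  interpret S': perm_on "s \<circ> Transposition.transpose x y \<circ> a" D
    using perm_on_comp S.perm_on_comp_transpose[OF assms(2,3)] perm_on.bij_D by blast
  show "z \<in> D \<Longrightarrow> cycle_of (s \<circ> Transposition.transpose x y \<circ> a) z =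
      cycle_of (s \<circ> a \<circ> Transposition.transpose (a x) (a y)) z"
    by (rule cycle_of_cong_on[OF comp_transpose_comp_eq[OF assms(2,3)] S'.image_subset])
  show "cycles_on (s \<circ> Transposition.transpose x y \<circ> a) D =
      cycles_on (s \<circ> a \<circ> Transposition.transpose (a x) (a y)) D"
    by (rule cycles_on_cong_on[OF comp_transpose_comp_eq[OF assms(2,3)] S'.image_subset])
qed

lemma cycle_of_comp_if_fixed:
  assumes fixed: "\<And>d. d \<in> D \<Longrightarrow> s d = d" and d: "d \<in> D"
  shows "cycle_of (s \<circ> a) d = {d, a d}"
proof -
  define g where "g = s \<circ> a"
  have "(g ^^ k) d \<in> {d, a d}" for k
  proof (induction k)
    case (Suc k)
    then obtain e where "e \<in> {d, a d}" "(g ^^ k) d = e" by blast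
    moreover have "a e \<in> {d, a d}" "a e \<in> D" using calculation(1) involution[OF d] d by auto
    moreover have "g e = a e" using fixed calculation(4) unfolding g_def by simp
    ultimately show ?case by simp
  qed simp
  moreover have "a d = (g ^^ 1) d" using d involution fixed unfolding g_def by simp
  ultimately show ?thesis unfolding cycle_of_def g_def[symmetric]
    by (auto intro: exI[of _ 0] exI[of _ 1])
qed

lemma Image_rtrancl_dart_graph_if_fixed:
  assumes fixed: "\<And>d. d \<in> D \<Longrightarrow> s d = d" and d: "d \<in> D"
  shows "(dart_graph s a D)\<^sup>* `` {d} = {d, a d}"
proof -
  have "v \<in> {d, a d}" if "(d, v) \<in> (dart_graph s a D)\<^sup>*" for v
    using that
  proof (induction rule: rtrancl_induct)
    case (step u w)
    then have "u \<in> D" using involution[OF d] d by blast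
    with step.hyps(2) have "w = a u \<or> w = u" unfolding dart_graph_def using fixed by auto
    then show ?case using step.IH involution[OF d] by auto
  qed simp
  moreover have "(d, a d) \<in> dart_graph s a D" using d unfolding dart_graph_def by blast
  ultimately show ?thesis by blast
qed

lemma euler_bound_fixed:
  assumes fixed: "\<And>d. d \<in> D \<Longrightarrow> s d = d"
  shows "2 * card (cycles_on s D) + 2 * card (cycles_on (s \<circ> a) D)
    \<le> card D + 4 * card (components_on (dart_graph s a D) D)"
proof -
  have "(s ^^ k) d = d" if "d \<in> D" for d k
    by (induction k) (simp_all add: fixed that)
  then have "cycles_on s D = (\<lambda>d. {d}) ` D" unfolding cycles_on_def cycle_of_def by auto
  then have V: "card (cycles_on s D) = card D" by (simp add: card_image)
  have C: "components_on (dart_graph s a D) D = cycles_on (s \<circ> a) D"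
    unfolding components_on_def cycles_on_def
    using cycle_of_comp_if_fixed[OF fixed] Image_rtrancl_dart_graph_if_fixed[OF fixed]
    by (auto simp: image_def)
  have "\<Union> (cycles_on (s \<circ> a) D) = D"
    using cycle_of_comp_if_fixed[OF fixed] involution unfolding cycles_on_def by auto
  then have "card D \<le> (\<Sum>P\<in>cycles_on (s \<circ> a) D. card P)"
    by (metis card_Union_le_sum_card)
  also have "\<dots> \<le> (\<Sum>P\<in>cycles_on (s \<circ> a) D. 2)"
    by (rule sum_mono) (auto simp: cycles_on_def cycle_of_comp_if_fixed[OF fixed] card_insert_if)
  finally show ?thesis using V C by simp
qed

lemma euler_bound_step:
  fixes s :: "'a \<Rightarrow> 'a"
  assumes bij: "bij_betw s D D" and x: "x \<in> D" and sx: "s x \<noteq> x"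
  defines "s' \<equiv> s \<circ> Transposition.transpose x (s x)"
  assumes IH: "2 * card (cycles_on s' D) + 2 * card (cycles_on (s' \<circ> a) D)
    \<le> card D + 4 * card (components_on (dart_graph s' a D) D)"
  shows "2 * card (cycles_on s D) + 2 * card (cycles_on (s \<circ> a) D)
    \<le> card D + 4 * card (components_on (dart_graph s a D) D)"
proof -
  \<comment> \<open>The vertex count rises by one; the face count either rises by one as well, or drops by
    one while the number of components is unchanged.\<close>
  interpret S: perm_on s D using finite_D bij by unfold_locales
  interpret P: perm_on "s \<circ> a" D using perm_on_comp[OF bij] .
  define y where "y = s x"
  have y: "y \<in> D" "x \<noteq> y" "y \<in> cycle_of s x"
    using S.image_subset x sx funpow_in_cycle_of[of 1 s x] y_def by auto
  have a: "a x \<in> D" "a y \<in> D" "a x \<noteq> a y" using involution x y by metis+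
  have s': "s' = s \<circ> Transposition.transpose x y" unfolding s'_def y_def ..
  have V: "card (cycles_on s' D) = card (cycles_on s D) + 1"
    unfolding s' by (rule S.card_cycles_on_comp_transpose_split[OF x y])
  have F: "cycles_on (s' \<circ> a) D = cycles_on (s \<circ> a \<circ> Transposition.transpose (a x) (a y)) D"
    unfolding s' by (rule cycles_on_comp_transpose_comp[OF bij x y(1)])
  define R' where "R' = dart_graph s' a D"
  have R: "(dart_graph s a D)\<^sup>* = (R' \<union> {(x, y), (y, x)})\<^sup>*"
    unfolding R'_def s'_def y_def using rtrancl_dart_graph_comp_transpose_succ x y(1) y_def by simp
  show ?thesis
  proof (cases "a y \<in> cycle_of (s \<circ> a) (a x)")
    case True
    then have "card (cycles_on (s' \<circ> a) D) = card (cycles_on (s \<circ> a) D) + 1"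
      unfolding F by (rule P.card_cycles_on_comp_transpose_split[OF a])
    moreover have "card (components_on R' D) \<le> card (components_on (dart_graph s a D) D) + 1"
      using card_components_on_le_insert_edge[OF finite_D sym_dart_graph x y(1)] R
      unfolding R'_def components_on_def by simp
    ultimately show ?thesis using IH V unfolding R'_def by linarith
  next
    case False
    then have "card (cycles_on (s' \<circ> a) D) + 1 = card (cycles_on (s \<circ> a) D)"
      unfolding F by (rule P.card_cycles_on_comp_transpose_merge[OF a(1,2)])
    moreover have "a y \<in> cycle_of (s' \<circ> a) (a x)"
      using P.cycle_of_comp_transpose_joins[OF a(1,2) False]
      unfolding s' cycle_of_comp_transpose_comp[OF bij x y(1) a(1)] .
    then have "(x, y) \<in> R'\<^sup>*"
      unfolding R'_def s' using S.perm_on_comp_transpose[OF x y(1)] perm_on.image_subset x y(1)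
      by (blast intro: rtrancl_dart_graph_if_face_joined)
    then have "(dart_graph s a D)\<^sup>* = R'\<^sup>*"
      using R rtrancl_insert_edge_if_connected[OF sym_dart_graph] R'_def by simp
    ultimately show ?thesis using IH V unfolding R'_def components_on_def by simp
  qed
qed

lemma euler_bound:
  "bij_betw s D D \<Longrightarrow> 2 * card (cycles_on s D) + 2 * card (cycles_on (s \<circ> a) D)
    \<le> card D + 4 * card (components_on (dart_graph s a D) D)"
proof (induction "card {d \<in> D. s d \<noteq> d}" arbitrary: s rule: less_induct)
  case less
  interpret S: perm_on s D using finite_D less.prems by unfold_locales
  show ?case
  proof (cases "\<forall>d\<in>D. s d = d")
    case False
    then obtain x where x: "x \<in> D" "s x \<noteq> x" by auto
    then have "perm_on (s \<circ> Transposition.transpose x (s x)) D"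
      using S.perm_on_comp_transpose S.image_subset by auto
    then show ?thesis
      using less.hyps[OF S.card_nonfixed_comp_transpose_less[OF x]]
        euler_bound_step[OF less.prems x]
      unfolding perm_on_def by blast
  qed (simp add: euler_bound_fixed)
qed

lemma components_on_comp_transpose_if_connected:
  assumes bij: "bij_betw s D D" and connected: "D \<times> D \<subseteq> (dart_graph s a D)\<^sup>*"
    and u: "u \<in> D" and v: "v \<in> D"
    and uv: "(u, v) \<in> (dart_graph (s \<circ> Transposition.transpose u v) a D)\<^sup>*"
  shows "components_on (dart_graph (s \<circ> Transposition.transpose u v) a D) D = {D}"
proof -
  interpret S: perm_on s D using finite_D bij by unfold_locales
  define R' where "R' = dart_graph (s \<circ> Transposition.transpose u v) a D"
  have "(R' \<union> {(u, v), (v, u)})\<^sup>* = R'\<^sup>*"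
    unfolding R'_def by (rule rtrancl_insert_edge_if_connected[OF sym_dart_graph uv])
  then have "dart_graph s a D \<subseteq> R'\<^sup>*"
    using dart_graph_subset_comp_transpose[OF u v, of s a] unfolding R'_def by simp
  then have "(d, e) \<in> R'\<^sup>*" if "d \<in> D" "e \<in> D" for d e
    using connected that rtrancl_subset_rtrancl by blast
  moreover have "R' \<subseteq> D \<times> D"
    unfolding R'_def
    by (rule dart_graph_subset[OF perm_on.image_subset[OF S.perm_on_comp_transpose[OF u v]]])
  ultimately have "R'\<^sup>* `` {d} = D" if "d \<in> D" for d
    using that rtrancl_closed[of R' D d] by blast
  then show ?thesis unfolding components_on_def R'_def[symmetric] using u by auto
qed

text \<open>If a vertex (a cycle of s) and a face (a cycle of s \<circ> a) of a connected planar map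
  both pass through the corners u and v, then splitting the vertex at u and v disconnects the map:
  otherwise vertices and faces would both increase by one, violating the Euler bound.\<close>

lemma split_disconnects:
  assumes bij: "bij_betw s D D"
    and connected: "D \<times> D \<subseteq> (dart_graph s a D)\<^sup>*"
    and euler: "card (cycles_on s D) + card (cycles_on (s \<circ> a) D) = card D div 2 + 2"
    and u: "u \<in> D" and v: "v \<in> D" and uv: "u \<noteq> v"
    and vertex: "v \<in> cycle_of s u" and face: "a v \<in> cycle_of (s \<circ> a) (a u)"
  shows "(u, v) \<notin> (dart_graph (s \<circ> Transposition.transpose u v) a D)\<^sup>*"
proof
  interpret S: perm_on s D using finite_D bij by unfold_locales
  interpret P: perm_on "s \<circ> a" D using perm_on_comp[OF bij] .
  define s' where "s' = s \<circ> Transposition.transpose u v"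
  assume "(u, v) \<in> (dart_graph (s \<circ> Transposition.transpose u v) a D)\<^sup>*"
  then have "components_on (dart_graph s' a D) D = {D}"
    unfolding s'_def by (rule components_on_comp_transpose_if_connected[OF bij connected u v])
  moreover have "bij_betw s' D D" unfolding s'_def
    using S.perm_on_comp_transpose[OF u v] perm_on.bij_D by blast
  ultimately have "2 * card (cycles_on s' D) + 2 * card (cycles_on (s' \<circ> a) D) \<le> card D + 4"
    using euler_bound by fastforce
  moreover have "card (cycles_on s' D) = card (cycles_on s D) + 1"
    unfolding s'_def by (rule S.card_cycles_on_comp_transpose_split[OF u v uv vertex])
  moreover have "card (cycles_on (s' \<circ> a) D) = card (cycles_on (s \<circ> a) D) + 1"
    unfolding s'_def cycles_on_comp_transpose_comp[OF bij u v]
    using involution u v uv by (metis P.card_cycles_on_comp_transpose_split face)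
  ultimately show False using euler by linarith
qed

end


lemma phi_eq_comp: "phi M = nxt M \<circ> opp M"
  unfolding phi_def by (rule ext) simp

lemma face_orbit_eq_cycle_of: "face_orbit M d = cycle_of (phi M) d"
  unfolding face_orbit_def cycle_of_def ..

locale plane_map =
  fixes M :: "('v, 'd) bmap"
  assumes plane_bip_map: "plane_bip_map M"
begin

abbreviation "D \<equiv> darts M"
abbreviation "s \<equiv> nxt M"
abbreviation "a \<equiv> opp M"

lemma finite_darts: "finite D"
  and opp_involution: "d \<in> D \<Longrightarrow> a d \<in> D \<and> a d \<noteq> d \<and> a (a d) = d"
  and bij_nxt: "bij_betw s D D"
  and src_nxt: "d \<in> D \<Longrightarrow> src M (s d) = src M d"
  and nxt_transitive: "d \<in> D \<Longrightarrow> e \<in> D \<Longrightarrow> src M d = src M e \<Longrightarrow> \<exists>k. (s ^^ k) d = e"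
  and src_in_verts: "d \<in> D \<Longrightarrow> src M d \<in> verts M"
  and src_opp_black: "d \<in> D \<Longrightarrow> src M d \<in> blacks M \<longleftrightarrow> src M (a d) \<notin> blacks M"
  and connected: "u \<in> verts M \<Longrightarrow> v \<in> verts M \<Longrightarrow> (u, v) \<in> (edge_rel M)\<^sup>*"
  and euler_formula: "int (card (verts M)) - int (card D div 2) + int (card (faces M)) = 2"
  using plane_bip_map unfolding plane_bip_map_def by blast+

sublocale fpf_involution a D
  using finite_darts opp_involution by unfold_locales

sublocale nxt: perm_on s D
  using finite_darts bij_nxt by unfold_locales

sublocale phi: perm_on "phi M" D
  unfolding phi_eq_comp by (rule perm_on_comp[OF bij_nxt])

lemma src_funpow_nxt: "d \<in> D \<Longrightarrow> src M ((s ^^ k) d) = src M d"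
  by (induction k) (auto simp: src_nxt funpow_closed[OF nxt.image_subset])

lemma src_phi_black: "d \<in> D \<Longrightarrow> src M (phi M d) \<in> blacks M \<longleftrightarrow> src M d \<notin> blacks M"
  unfolding phi_def using src_nxt opp_involution src_opp_black by metis

lemma src_funpow_phi_black:
  assumes "d \<in> D"
  shows "src M ((phi M ^^ k) d) \<in> blacks M \<longleftrightarrow> (src M d \<in> blacks M \<longleftrightarrow> even k)"
proof (induction k)
  case (Suc k)
  then show ?case
    using src_phi_black[OF funpow_closed[OF phi.image_subset assms]] by simp
qed simp

lemma verts_eq_src_darts: assumes "d0 \<in> D" shows "verts M = src M ` D"
proof
  show "verts M \<subseteq> src M ` D"
  proof
    fix v assume "v \<in> verts M"
    then have "(src M d0, v) \<in> (edge_rel M)\<^sup>*" using connected src_in_verts[OF assms] by blast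
    then show "v \<in> src M ` D"
    proof (cases rule: rtranclE)
      case (step u)
      then obtain d where "d \<in> D" "v = src M (a d)" unfolding edge_rel_def by auto
      then show ?thesis using opp_involution by auto
    qed (use assms in auto)
  qed
qed (use src_in_verts in auto)

lemma cycle_of_nxt: assumes "d \<in> D" shows "cycle_of s d = {e \<in> D. src M e = src M d}"
proof
  show "cycle_of s d \<subseteq> {e \<in> D. src M e = src M d}"
    using cycle_of_subset[OF nxt.image_subset assms] src_funpow_nxt[OF assms]
    unfolding cycle_of_def by auto
  show "{e \<in> D. src M e = src M d} \<subseteq> cycle_of s d"
    using nxt_transitive assms unfolding cycle_of_def by fastforce
qed

lemma card_verts: assumes "d0 \<in> D" shows "card (verts M) = card (cycles_on s D)"
proof -
  have "cycles_on s D = (\<lambda>v. {e \<in> D. src M e = v}) ` (src M ` D)"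
    unfolding cycles_on_def using cycle_of_nxt by (auto simp: image_def)
  moreover have "inj_on (\<lambda>v. {e \<in> D. src M e = v}) (src M ` D)"
    by (rule inj_onI) blast
  ultimately show ?thesis using verts_eq_src_darts[OF assms] by (simp add: card_image)
qed

lemma euler_cycles:
  assumes "d0 \<in> D"
  shows "card (cycles_on s D) + card (cycles_on (s \<circ> a) D) = card D div 2 + 2"
proof -
  have "faces M = cycles_on (s \<circ> a) D"
    unfolding faces_def cycles_on_def face_orbit_eq_cycle_of phi_eq_comp ..
  then show ?thesis using euler_formula card_verts[OF assms] by simp
qed

lemma dart_graph_connected: "D \<times> D \<subseteq> (dart_graph s a D)\<^sup>*"
proof (intro subsetI, clarify)
  fix d e assume d: "d \<in> D" and e: "e \<in> D"
  have around: "(f, g) \<in> (dart_graph s a D)\<^sup>*" if "f \<in> D" "g \<in> D" "src M f = src M g" for f g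
    using rtrancl_dart_graph_if_mem_vertex_cycle[OF nxt.image_subset] cycle_of_nxt that by simp
  have "(d, g) \<in> (dart_graph s a D)\<^sup>*" if "(src M d, v) \<in> (edge_rel M)\<^sup>*" "g \<in> D" "src M g = v"
    for v g
    using that
  proof (induction arbitrary: g rule: rtrancl_induct)
    case base
    then show ?case using around[OF d] by simp
  next
    case (step u v)
    then obtain f where f: "f \<in> D" "u = src M f" "v = src M (a f)" unfolding edge_rel_def by auto
    have "(f, a f) \<in> dart_graph s a D" unfolding dart_graph_def using f by blast
    moreover have "(d, f) \<in> (dart_graph s a D)\<^sup>*" using step.IH f by blast
    ultimately have "(d, a f) \<in> (dart_graph s a D)\<^sup>*" by (rule rtrancl_into_rtrancl[rotated])
    moreover have "(a f, g) \<in> (dart_graph s a D)\<^sup>*"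
      using around[of "a f" g] opp_involution f step.prems by auto
    ultimately show ?case by (rule rtrancl_trans)
  qed
  then show "(d, e) \<in> (dart_graph s a D)\<^sup>*" using connected src_in_verts d e by blast
qed

end


section \<open>Faces of minimal BTB graphs\<close>

lemma acyclic_successor_reaches:
  assumes "finite K" "q \<in> K" "q \<noteq> t" "acyclic Z"
    and succ: "\<And>e. e \<in> K \<Longrightarrow> e \<noteq> t \<Longrightarrow> \<exists>e'\<in>K. (e, e') \<in> Z"
  shows "(q, t) \<in> Z\<^sup>+"
proof -
  let ?Z = "Z \<inter> K \<times> K"
  have "wf (?Z\<inverse>)"
    using assms(1,4) by (intro finite_acyclic_wf_converse) (auto intro: acyclic_subset)
  then have "e \<in> K \<longrightarrow> e = t \<or> (e, t) \<in> Z\<^sup>+" for e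
  proof (induction e rule: wf_induct_rule)
    case (less e)
    show ?case
    proof (intro impI)
      assume e: "e \<in> K"
      show "e = t \<or> (e, t) \<in> Z\<^sup>+"
      proof (cases "e = t")
        case False
        then obtain e' where "e' \<in> K" "(e, e') \<in> Z" using succ e by blast
        then show ?thesis using less[of e'] e by (auto intro: trancl_into_trancl2)
      qed simp
    qed
  qed
  then show ?thesis using assms(2,3) by blast
qed

locale btb_graph =
  fixes M :: "('v, 'd) bmap" and n :: nat and wb bb :: "nat \<Rightarrow> 'v" and a0 :: 'd
  assumes btb_int: "btb_int M n wb bb a0"
begin

sublocale plane_map M
  using btb_int unfolding btb_int_def by unfold_locales blast

lemma a0_in_darts: "a0 \<in> D"
  and bb_black: "i < n \<Longrightarrow> bb i \<in> blacks M"
  and src_bb: "i < n \<Longrightarrow> src M ((phi M ^^ (2*i+1)) a0) = bb i"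
  and degree_bb: "i < n \<Longrightarrow> degree M (bb i) = 2"
  and degree_black: "b \<in> blacks M \<Longrightarrow> b \<notin> bb ` {..<n} \<Longrightarrow> degree M b = 3"
  using btb_int unfolding btb_int_def by auto

text \<open>Splitting the white vertex w at the darts u and v leaving it means replacing the rotation s
  by s \<circ> transpose u v.\<close>

lemma split_boundary_connected:
  assumes w: "w \<in> whites M" "src M u = w" "src M v = w" and uv: "u \<in> D" "v \<in> D"
    and outer: "a u \<notin> outer_face M a0" "a v \<notin> outer_face M a0"
    and e: "i < n" "e \<in> D" "src M e = bb i"
  shows "(a0, e) \<in> (dart_graph (s \<circ> Transposition.transpose u v) a D)\<^sup>*"
proof -
  let ?s' = "s \<circ> Transposition.transpose u v"
  have closed: "?s' ` D \<subseteq> D"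
    using perm_on.image_subset[OF nxt.perm_on_comp_transpose[OF uv]] .
  define d1 where "d1 = (phi M ^^ (2*i+1)) a0"
  have d1: "d1 \<in> D" "src M d1 = bb i"
    using funpow_closed[OF phi.image_subset a0_in_darts] src_bb[OF e(1)] unfolding d1_def by blast+
  have "d1 \<in> cycle_of (s \<circ> a) a0" unfolding d1_def phi_eq_comp by (rule funpow_in_cycle_of)
  have "cycle_of (phi M) a0 \<noteq> cycle_of (phi M) (a z)" if "a z \<notin> outer_face M a0" for z
    using that self_in_cycle_of unfolding outer_face_def face_orbit_eq_cycle_of by metis
  then have "cycle_of (?s' \<circ> a) a0 = cycle_of (s \<circ> a) a0"
    using phi.cycle_of_comp_transpose_other[OF a0_in_darts] outer
    unfolding cycle_of_comp_transpose_comp[OF bij_nxt uv a0_in_darts] phi_eq_comp by blast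
  then have "(a0, d1) \<in> (dart_graph ?s' a D)\<^sup>*"
    using rtrancl_dart_graph_if_mem_face_cycle[OF closed a0_in_darts] \<open>d1 \<in> cycle_of (s \<circ> a) a0\<close>
    by simp
  moreover have "cycle_of s d1 \<noteq> cycle_of s z" if "src M z = w" "z \<in> D" for z
    using that cycle_of_nxt d1 bb_black[OF e(1)] w(1) self_in_cycle_of unfolding whites_def
    by (metis (mono_tags, lifting) DiffD2 mem_Collect_eq)
  then have "cycle_of ?s' d1 = cycle_of s d1"
    using nxt.cycle_of_comp_transpose_other[OF d1(1)] w uv by blast
  then have "(d1, e) \<in> (dart_graph ?s' a D)\<^sup>*"
    using rtrancl_dart_graph_if_mem_vertex_cycle[OF closed d1(1)] cycle_of_nxt[OF d1(1)] e d1(2)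
    by simp
  ultimately show ?thesis by (rule rtrancl_trans)
qed

lemma split_component_zigzag_successor:
  assumes w: "w \<in> whites M" "src M u = w" "src M v = w"
    and K: "K = (dart_graph (s \<circ> Transposition.transpose u v) a D)\<^sup>* `` {u}"
    and v: "v \<notin> K" and K_G: "K \<subseteq> G_darts M n bb"
    and e: "e \<in> K" "e \<noteq> a u"
  shows "\<exists>e'\<in>K. (e, e') \<in> zz_step M n bb"
proof -
  define s' where "s' = s \<circ> Transposition.transpose u v"
  have K_step: "e'' \<in> K" if "e' \<in> K" "(e', e'') \<in> dart_graph s' a D" for e' e''
    using that K s'_def by (auto intro: rtrancl_into_rtrancl)
  have "e \<in> D" using e K_G unfolding G_darts_def by auto
  then have "a e \<in> K" using K_step[OF e(1)] unfolding dart_graph_def by blast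
  have "a e \<noteq> u" using e(2) opp_involution[OF \<open>e \<in> D\<close>] by metis
  have "a e \<noteq> v" using v \<open>a e \<in> K\<close> by blast
  show ?thesis
  proof (cases "src M (a e) \<in> whites M")
    case True
    have "s' (a e) = s (a e)" using \<open>a e \<noteq> u\<close> \<open>a e \<noteq> v\<close> s'_def by simp
    moreover have "(a e, s' (a e)) \<in> dart_graph s' a D"
      using \<open>a e \<in> K\<close> K_G unfolding dart_graph_def G_darts_def by blast
    ultimately have "s (a e) \<in> K" using K_step[OF \<open>a e \<in> K\<close>] by simp
    then show ?thesis using True e(1) K_G unfolding zz_step_def by auto
  next
    case False
    have "a e \<in> D" using opp_involution[OF \<open>e \<in> D\<close>] by blast
    then obtain e' where e': "e' \<in> D" "s e' = a e"
      using nxt.bij_D by (metis bij_betw_imp_surj_on imageE)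
    then have "src M e' \<noteq> w" using False w(1) src_nxt by metis
    then have "e' \<noteq> u" "e' \<noteq> v" using w by auto
    then have "s' e' = a e" using e'(2) s'_def by simp
    then have "(a e, e') \<in> dart_graph s' a D" using e'(1) unfolding dart_graph_def by force
    then have "e' \<in> K" using K_step[OF \<open>a e \<in> K\<close>] by blast
    then show ?thesis using False e e'(2) K_G unfolding zz_step_def by auto
  qed
qed

lemma split_component_contradicts_minimal:
  assumes min: "minimal M n bb"
    and w: "w \<in> whites M" "src M u = w" "src M v = w" and uv: "u \<in> D" "v \<in> D"
    and outer: "a u \<notin> outer_face M a0" "a v \<notin> outer_face M a0"
    and not_a0: "(u, a0) \<notin> (dart_graph (s \<circ> Transposition.transpose u v) a D)\<^sup>*"
    and not_v: "(u, v) \<notin> (dart_graph (s \<circ> Transposition.transpose u v) a D)\<^sup>*"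
  shows False
proof -
  define R' where "R' = dart_graph (s \<circ> Transposition.transpose u v) a D"
  define K where "K = R'\<^sup>* `` {u}"
  have "R' \<subseteq> D \<times> D"
    unfolding R'_def using perm_on.image_subset[OF nxt.perm_on_comp_transpose[OF uv]]
    by (rule dart_graph_subset)
  have K_D: "e \<in> D" if "e \<in> K" for e
    using rtrancl_closed[OF \<open>R' \<subseteq> D \<times> D\<close> _ uv(1)] that unfolding K_def by simp
  have K_a: "a e \<in> K" if "e \<in> K" for e
  proof -
    have "(e, a e) \<in> R'" using K_D[OF that] unfolding R'_def dart_graph_def by blast
    then show ?thesis using that unfolding K_def by (simp add: rtrancl_into_rtrancl)
  qed
  have K_bb: "src M e \<notin> bb ` {..<n}" if "e \<in> K" for e
  proof
    assume "src M e \<in> bb ` {..<n}"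
    then obtain i where "i < n" "src M e = bb i" by blast
    then have "(a0, e) \<in> R'\<^sup>*"
      unfolding R'_def by (rule split_boundary_connected[OF w uv outer _ K_D[OF that]])
    then have "(e, a0) \<in> R'\<^sup>*"
      using symD[OF sym_rtrancl[OF sym_dart_graph]] unfolding R'_def by blast
    moreover have "(u, e) \<in> R'\<^sup>*" using that unfolding K_def by simp
    ultimately have "(u, a0) \<in> R'\<^sup>*" by (rule rtrancl_trans[rotated])
    then show False using not_a0 unfolding R'_def by simp
  qed
  have K_G: "K \<subseteq> G_darts M n bb"
    unfolding G_darts_def using K_D K_a K_bb by blast
  have "v \<notin> K" using not_v unfolding K_def R'_def by simp
  have "finite K" using K_D finite_darts by (meson finite_subset subsetI)
  moreover have "u \<in> K" "u \<noteq> a u" unfolding K_def using opp_involution[OF uv(1)] by auto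
  moreover have "acyclic (zz_step M n bb)" using min unfolding minimal_def acyclic_def by blast
  moreover have "\<exists>e'\<in>K. (e, e') \<in> zz_step M n bb" if "e \<in> K" "e \<noteq> a u" for e
    by (rule split_component_zigzag_successor[OF w K_def[unfolded R'_def] \<open>v \<notin> K\<close> K_G that])
  ultimately have "(u, a u) \<in> (zz_step M n bb)\<^sup>+" by (rule acyclic_successor_reaches)
  then show False using min unfolding minimal_def by blast
qed

lemma not_outer_if_face_orbit:
  assumes "d0 \<in> D" "d0 \<notin> outer_face M a0" "p \<in> face_orbit M d0"
  shows "p \<notin> outer_face M a0"
  using assms phi.cycle_of_eq_if_mem[OF assms(1)] phi.cycle_of_eq_if_mem[OF a0_in_darts]
    self_in_cycle_of
  unfolding outer_face_def face_orbit_eq_cycle_of by metis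

lemma inner_face_white_corner_unique:
  assumes min: "minimal M n bb" and d0: "d0 \<in> D" "d0 \<notin> outer_face M a0"
    and p: "p1 \<in> face_orbit M d0" "p2 \<in> face_orbit M d0"
    and w: "src M (phi M p1) \<in> whites M" "src M (phi M p2) = src M (phi M p1)"
  shows "p1 = p2"
proof (rule ccontr)
  assume "p1 \<noteq> p2"
  have p_D: "p1 \<in> D" "p2 \<in> D"
    using p cycle_of_subset[OF phi.image_subset d0(1)] unfolding face_orbit_eq_cycle_of by auto
  define u where "u = a p1"
  define v where "v = a p2"
  have uv: "u \<in> D" "v \<in> D" "u \<noteq> v" "a u = p1" "a v = p2"
    using opp_involution p_D \<open>p1 \<noteq> p2\<close> unfolding u_def v_def by metis+
  have src_uv: "src M u = src M (phi M p1)" "src M v = src M (phi M p1)"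
    using src_nxt uv w(2) unfolding phi_def u_def v_def by auto
  have outer: "a u \<notin> outer_face M a0" "a v \<notin> outer_face M a0"
    using not_outer_if_face_orbit[OF d0] p uv by auto
  define R' where "R' = dart_graph (s \<circ> Transposition.transpose u v) a D"
  have "v \<in> cycle_of s u" using cycle_of_nxt[OF uv(1)] uv src_uv by auto
  moreover have "a v \<in> cycle_of (s \<circ> a) (a u)"
    using p uv phi.cycle_of_eq_if_mem[OF d0(1)]
    unfolding face_orbit_eq_cycle_of phi_eq_comp[symmetric] by metis
  ultimately have disconnected: "(u, v) \<notin> R'\<^sup>*" unfolding R'_def
    by (rule split_disconnects[OF bij_nxt dart_graph_connected euler_cycles[OF a0_in_darts]
          uv(1-3)])
  have R'_sym: "(e, d) \<in> R'\<^sup>*" if "(d, e) \<in> R'\<^sup>*" for d e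
    using that symD[OF sym_rtrancl[OF sym_dart_graph]] unfolding R'_def by blast
  then have "(u, a0) \<notin> R'\<^sup>* \<or> (v, a0) \<notin> R'\<^sup>*"
    using disconnected by (meson rtrancl_trans)
  then show False
  proof
    assume "(u, a0) \<notin> R'\<^sup>*"
    then show False
      using split_component_contradicts_minimal[OF min w(1) src_uv uv(1,2) outer] disconnected
      unfolding R'_def by blast
  next
    assume "(v, a0) \<notin> R'\<^sup>*"
    moreover have "R' = dart_graph (s \<circ> Transposition.transpose v u) a D"
      unfolding R'_def by (simp add: transpose_commute)
    ultimately show False
      using split_component_contradicts_minimal[OF min w(1) src_uv(2,1) uv(2,1) outer(2,1)]
        disconnected R'_sym by blast
  qed
qed

end


section \<open>Sections of three points by a hyperplane\<close>

lemma dim_span_Un_add_dim_Int: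
  fixes S T :: "(complex ^ 'n) set"
  assumes "vec.subspace S" "vec.subspace T"
  shows "vec.dim (vec.span (S \<union> T)) + vec.dim (S \<inter> T) = vec.dim S + vec.dim T"
proof -
  have "vec.span (S \<union> T) = {x + y | x y. x \<in> S \<and> y \<in> T}"
  proof -
    have e: "vec.span S = S" "vec.span T = T" using assms vec.span_eq_iff by blast+
    show ?thesis using vec.span_Un[of S T] by (simp only: e)
  qed
  then show ?thesis using vec.dim_sums_Int[OF assms] by simp
qed

lemma dim_le_CARD: "vec.dim (S :: (complex ^ 'n) set) \<le> CARD('n)"
  using vec.dim_subset[of S UNIV] by (simp add: card_cart_basis)

lemma dim_Int_hyperplane:
  fixes S H :: "(complex ^ 'n) set"
  assumes H: "hyperplane H" and S: "vec.subspace S" and nS: "\<not> S \<subseteq> H"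
  shows "vec.dim (S \<inter> H) + 1 = vec.dim S"
proof -
  have sH: "vec.subspace H" and dH: "vec.dim H = CARD('n) - 1" using H unfolding hyperplane_def
    by auto
  have N: "CARD('n) \<ge> 1" by (simp add: Suc_leI)
  let ?U = "vec.span (S \<union> H)"
  have sU: "vec.subspace ?U" by simp
  have HU: "H \<subseteq> ?U" "S \<subseteq> ?U" using vec.span_superset by blast+
  have "H \<noteq> ?U" using HU nS by auto
  then have "\<not> vec.dim ?U \<le> vec.dim H" using vec.subspace_dim_equal[OF sH sU HU(1)] by blast
  then have "vec.dim ?U = CARD('n)" using dH dim_le_CARD[of ?U] N by linarith
  then show ?thesis using dim_span_Un_add_dim_Int[OF S sH] dH N by linarith
qed

lemma dim_span_two_points:
  fixes P Q :: "(complex ^ 'n) set"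
  assumes P: "ppoint P" and Q: "ppoint Q" and PQ: "P \<noteq> Q"
  shows "vec.dim (vec.span (P \<union> Q)) = 2"
proof -
  have sP: "vec.subspace P" "vec.dim P = 1" using P unfolding ppoint_def by auto
  have sQ: "vec.subspace Q" "vec.dim Q = 1" using Q unfolding ppoint_def by auto
  have sI: "vec.subspace (P \<inter> Q)" using vec.subspace_inter sP sQ by blast
  have "vec.dim (P \<inter> Q) \<le> 1" using vec.dim_subset[of "P \<inter> Q" P] sP by simp
  moreover have "vec.dim (P \<inter> Q) \<noteq> 1"
  proof
    assume d1: "vec.dim (P \<inter> Q) = 1"
    have "P \<inter> Q = P" using vec.subspace_dim_equal[OF sI sP(1)] d1 sP by simp
    moreover have "P \<inter> Q = Q" using vec.subspace_dim_equal[OF sI sQ(1)] d1 sQ by simp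
    ultimately show False using PQ by simp
  qed
  ultimately have "vec.dim (P \<inter> Q) = 0" by linarith
  then show ?thesis using dim_span_Un_add_dim_Int[OF sP(1) sQ(1)] sP sQ by linarith
qed

lemma span_two_points_eq_line:
  fixes L P Q :: "(complex ^ 'n) set"
  assumes L: "vec.subspace L" "vec.dim L = 2" and P: "ppoint P" and Q: "ppoint Q"
    and PQ: "P \<noteq> Q" and PL: "P \<subseteq> L" and QL: "Q \<subseteq> L"
  shows "vec.span (P \<union> Q) = L"
proof -
  have "vec.span (P \<union> Q) \<subseteq> L" using vec.span_minimal PL QL L by blast
  then show ?thesis
    using vec.subspace_dim_equal[of "vec.span (P \<union> Q)" L] dim_span_two_points[OF P Q PQ] L by simp
qed

lemma neq_if_dim_span_three:
  fixes X Y Z :: "(complex ^ 'n) set"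
  assumes Y: "ppoint Y" and Z: "ppoint Z" and d3: "vec.dim (vec.span (X \<union> Y \<union> Z)) = 3"
  shows "X \<noteq> Y"
proof
  assume "X = Y"
  then have "vec.span (X \<union> Y \<union> Z) = vec.span (Y \<union> Z)" by simp
  moreover have "vec.dim (vec.span (Y \<union> Z)) \<le> 2"
    using dim_span_Un_add_dim_Int[of Y Z] Y Z unfolding ppoint_def by simp
  ultimately show False using d3 by simp
qed

lemma span_Int_hyperplane_neq:
  fixes A B C H :: "(complex ^ 'n) set"
  assumes H: "hyperplane H" and A: "ppoint A" and B: "ppoint B" and C: "ppoint C"
    and d3: "vec.dim (vec.span (A \<union> B \<union> C)) = 3" and nB: "\<not> B \<subseteq> H"
  shows "vec.span (A \<union> B) \<inter> H \<noteq> vec.span (B \<union> C) \<inter> H"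
proof
  assume eq: "vec.span (A \<union> B) \<inter> H = vec.span (B \<union> C) \<inter> H"
  let ?L1 = "vec.span (A \<union> B)" and ?L2 = "vec.span (B \<union> C)"
  have sB: "vec.subspace B" "vec.dim B = 1" using B unfolding ppoint_def by auto
  have "vec.span (A \<union> B \<union> C) \<subseteq> vec.span (?L1 \<union> ?L2)"
    by (rule vec.span_mono) (use vec.span_superset in blast)
  then have "vec.dim (vec.span (A \<union> B \<union> C)) \<le> vec.dim (vec.span (?L1 \<union> ?L2))"
    by (rule vec.dim_subset)
  then have g3: "vec.dim (vec.span (?L1 \<union> ?L2)) \<ge> 3" using d3 by linarith
  have AB: "A \<noteq> B" using neq_if_dim_span_three[OF B C d3] .
  have dL1: "vec.dim ?L1 = 2" using dim_span_two_points[OF A B AB] .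
  have "vec.dim ?L2 + vec.dim (B \<inter> C) = vec.dim B + vec.dim C"
    using dim_span_Un_add_dim_Int[of B C] B C unfolding ppoint_def by simp
  then have dL2: "vec.dim ?L2 \<le> 2" using B C unfolding ppoint_def by linarith
  have "vec.dim (vec.span (?L1 \<union> ?L2)) + vec.dim (?L1 \<inter> ?L2) = vec.dim ?L1 + vec.dim ?L2"
    by (rule dim_span_Un_add_dim_Int) simp_all
  then have dI: "vec.dim (?L1 \<inter> ?L2) \<le> 1" using g3 dL1 dL2 by linarith
  have sI: "vec.subspace (?L1 \<inter> ?L2)" by (simp add: vec.subspace_inter)
  have BI: "B \<subseteq> ?L1 \<inter> ?L2" using vec.span_superset by blast
  have BeqI: "B = ?L1 \<inter> ?L2" using vec.subspace_dim_equal[OF sB(1) sI BI] dI sB by simp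
  have nL1: "\<not> ?L1 \<subseteq> H" using nB vec.span_superset by blast
  have "vec.dim (?L1 \<inter> H) + 1 = vec.dim ?L1" using dim_Int_hyperplane[OF H _ nL1] by simp
  then have dQ: "vec.dim (?L1 \<inter> H) = 1" using dL1 by linarith
  have sQ: "vec.subspace (?L1 \<inter> H)" using H unfolding hyperplane_def
    by (simp add: vec.subspace_inter)
  have "?L1 \<inter> H \<subseteq> B" using eq BeqI by blast
  then have "?L1 \<inter> H = B" using vec.subspace_dim_equal[OF sQ sB(1)] dQ sB by simp
  then show False using nB by blast
qed

lemma ppoint_span_Int_hyperplane:
  fixes U V H :: "(complex ^ 'n) set"
  assumes H: "hyperplane H" and U: "ppoint U" and V: "ppoint V" and UV: "U \<noteq> V"
    and nU: "\<not> U \<subseteq> H"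
  shows "ppoint (vec.span (U \<union> V) \<inter> H)"
proof -
  have "\<not> vec.span (U \<union> V) \<subseteq> H" using nU vec.span_superset by blast
  then have "vec.dim (vec.span (U \<union> V) \<inter> H) + 1 = 2"
    using dim_Int_hyperplane[OF H] dim_span_two_points[OF U V UV] by (metis vec.subspace_span)
  then show ?thesis
    using H unfolding ppoint_def hyperplane_def by (simp add: vec.subspace_inter)
qed

lemma collinear3_span_Int_hyperplane:
  fixes X Y Z H :: "(complex ^ 'n) set"
  assumes H: "hyperplane H" and d3: "vec.dim (vec.span (X \<union> Y \<union> Z)) = 3" and nX: "\<not> X \<subseteq> H"
  shows "collinear3 (vec.span (X \<union> Y) \<inter> H) (vec.span (Y \<union> Z) \<inter> H) (vec.span (X \<union> Z) \<inter> H)"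
proof -
  let ?P = "vec.span (X \<union> Y \<union> Z)"
  have "\<not> ?P \<subseteq> H" using nX vec.span_superset[of "X \<union> Y \<union> Z"] by blast
  then have "vec.dim (?P \<inter> H) + 1 = 3" using dim_Int_hyperplane[OF H _] d3 by simp
  then have "pline (?P \<inter> H)"
    using H unfolding pline_def hyperplane_def by (simp add: vec.subspace_inter)
  moreover have "vec.span (X \<union> Y) \<subseteq> ?P" "vec.span (Y \<union> Z) \<subseteq> ?P" "vec.span (X \<union> Z) \<subseteq> ?P"
    by (rule vec.span_mono; blast)+
  ultimately show ?thesis unfolding collinear3_def by blast
qed

lemma tcd_triple_hyperplane_sections:
  fixes X Y Z H :: "(complex ^ 'n) set"
  assumes H: "hyperplane H" and X: "ppoint X" and Y: "ppoint Y" and Z: "ppoint Z"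
    and d3: "vec.dim (vec.span (X \<union> Y \<union> Z)) = 3"
    and nX: "\<not> X \<subseteq> H" and nY: "\<not> Y \<subseteq> H" and nZ: "\<not> Z \<subseteq> H"
  shows "tcd_triple (vec.span (X \<union> Y) \<inter> H) (vec.span (Y \<union> Z) \<inter> H) (vec.span (X \<union> Z) \<inter> H)"
proof -
  have d3': "vec.dim (vec.span (Y \<union> Z \<union> X)) = 3" "vec.dim (vec.span (Y \<union> X \<union> Z)) = 3"
    "vec.dim (vec.span (X \<union> Z \<union> Y)) = 3"
    using d3 by (simp_all add: Un_ac)
  have "X \<noteq> Y" "Y \<noteq> Z" "X \<noteq> Z"
    using neq_if_dim_span_three[OF Y Z d3] neq_if_dim_span_three[OF Z X d3'(1)]
      neq_if_dim_span_three[OF Z Y d3'(3)] by auto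
  then show ?thesis
    unfolding tcd_triple_def
    using ppoint_span_Int_hyperplane[OF H] X Y Z nX nY
      span_Int_hyperplane_neq[OF H X Y Z d3 nY]
      span_Int_hyperplane_neq[OF H Y Z X d3'(1) nZ] span_Int_hyperplane_neq[OF H Y X Z d3'(2) nX]
      collinear3_span_Int_hyperplane[OF H d3 nX]
    by (simp add: Un_ac)
qed


section \<open>Corners of the inner faces\<close>

context btb_graph
begin

lemma degree_black_ge_2: "b \<in> blacks M \<Longrightarrow> 2 \<le> degree M b"
  using degree_bb degree_black by (cases "b \<in> bb ` {..<n}") auto

lemma darts_at_src: "e \<in> D \<Longrightarrow> darts_at M (src M e) = cycle_of s e"
  unfolding darts_at_def using cycle_of_nxt by auto

lemma finite_darts_at: "finite (darts_at M b)"
  unfolding darts_at_def using finite_darts by simp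

lemma nxt_neq_at_black: assumes "e \<in> D" "src M e \<in> blacks M" shows "s e \<noteq> e"
proof
  assume "s e = e"
  then have "(s ^^ k) e = e" for k by (induction k) auto
  then have "cycle_of s e = {e}" unfolding cycle_of_def by auto
  then have "degree M (src M e) = 1" unfolding degree_def using darts_at_src[OF assms(1)] by simp
  then show False using degree_black_ge_2[OF assms(2)] by simp
qed

lemma src_opp_white: assumes "b \<in> blacks M" "e \<in> darts_at M b" shows "src M (a e) \<in> whites M"
proof -
  have "e \<in> D" "src M e = b" using assms(2) unfolding darts_at_def by auto
  then show ?thesis
    using src_opp_black src_in_verts opp_involution assms(1) unfolding whites_def by blast
qed

lemma face_starts_D: "d0 \<in> face_starts M a0 \<Longrightarrow> d0 \<in> D \<and> d0 \<notin> outer_face M a0 \<and> src M d0 \<in> blacks M"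
  unfolding face_starts_def by auto

lemma funpow_phi_in_darts: "d0 \<in> D \<Longrightarrow> (phi M ^^ k) d0 \<in> D"
  using funpow_closed[OF phi.image_subset] .

lemma card_face_orbit:
  assumes d0: "d0 \<in> D" and black: "src M d0 \<in> blacks M"
  shows "card (face_orbit M d0) = 2 * fdeg M d0" "(phi M ^^ (2 * fdeg M d0)) d0 = d0"
proof -
  have c: "card (face_orbit M d0) = phi.period d0"
    using phi.card_cycle_of[OF d0] unfolding face_orbit_eq_cycle_of .
  have "src M ((phi M ^^ phi.period d0) d0) = src M d0" using phi.funpow_period[OF d0] by simp
  then have "even (phi.period d0)" using src_funpow_phi_black[OF d0, of "phi.period d0"] black
    by simp
  then show "card (face_orbit M d0) = 2 * fdeg M d0" unfolding fdeg_def c by simp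
  then show "(phi M ^^ (2 * fdeg M d0)) d0 = d0" using c phi.funpow_period[OF d0] by simp
qed

lemma fw_white: assumes "d0 \<in> D" "src M d0 \<in> blacks M" shows "fw M d0 j \<in> whites M"
  using src_funpow_phi_black[OF assms(1), of "Suc (2*j)"] assms(2)
    src_in_verts[OF funpow_phi_in_darts[OF assms(1), of "Suc (2*j)"]]
  unfolding fw_def whites_def by simp

lemma fb_black: assumes "d0 \<in> D" "src M d0 \<in> blacks M" shows "fb M d0 j \<in> blacks M"
  using src_funpow_phi_black[OF assms(1), of "2*j"] assms(2) unfolding fb_def by simp

lemma dart_fb_to_fw:
  assumes "d0 \<in> D"
  shows "(phi M ^^ (2*j)) d0 \<in> darts_at M (fb M d0 j)"
    and "src M (a ((phi M ^^ (2*j)) d0)) = fw M d0 j"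
proof -
  define e where "e = (phi M ^^ (2*j)) d0"
  have "e \<in> D" unfolding e_def by (rule funpow_phi_in_darts[OF assms])
  then show "(phi M ^^ (2*j)) d0 \<in> darts_at M (fb M d0 j)"
    unfolding darts_at_def fb_def e_def by simp
  have "src M (a e) = src M (s (a e))" using src_nxt opp_involution \<open>e \<in> D\<close> by simp
  also have "s (a e) = (phi M ^^ (2*j+1)) d0" unfolding e_def by (simp add: phi_def)
  finally show "src M (a ((phi M ^^ (2*j)) d0)) = fw M d0 j" unfolding fw_def e_def .
qed

lemma dart_fb_Suc_to_fw:
  assumes "d0 \<in> D"
  shows "a ((phi M ^^ (2*j+1)) d0) \<in> darts_at M (fb M d0 (Suc j))"
    and "src M (a (a ((phi M ^^ (2*j+1)) d0))) = fw M d0 j"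
proof -
  define e where "e = (phi M ^^ (2*j+1)) d0"
  have "e \<in> D" unfolding e_def by (rule funpow_phi_in_darts[OF assms])
  then have "a e \<in> D" "a (a e) = e" using opp_involution by auto
  have "src M (a e) = src M (s (a e))" using src_nxt[OF \<open>a e \<in> D\<close>] by simp
  also have "s (a e) = (phi M ^^ (2 * Suc j)) d0" unfolding e_def by (simp add: phi_def)
  finally show "a ((phi M ^^ (2*j+1)) d0) \<in> darts_at M (fb M d0 (Suc j))"
    using \<open>a e \<in> D\<close> unfolding darts_at_def fb_def e_def by simp
  show "src M (a (a ((phi M ^^ (2*j+1)) d0))) = fw M d0 j"
    using \<open>a (a e) = e\<close> unfolding fw_def e_def by simp
qed

lemma darts_fb_Suc_distinct:
  assumes d0: "d0 \<in> D" and black: "src M d0 \<in> blacks M"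
  shows "(phi M ^^ (2 * Suc j)) d0 \<noteq> a ((phi M ^^ (2*j+1)) d0)"
proof
  define e where "e = a ((phi M ^^ (2*j+1)) d0)"
  assume "(phi M ^^ (2 * Suc j)) d0 = a ((phi M ^^ (2*j+1)) d0)"
  moreover have "(phi M ^^ (2 * Suc j)) d0 = s e" unfolding e_def by (simp add: phi_def)
  ultimately have "s e = e" using e_def by simp
  moreover have "e \<in> D" "src M e = fb M d0 (Suc j)"
    using dart_fb_Suc_to_fw(1)[OF d0, of j] e_def unfolding darts_at_def by simp_all
  ultimately show False using nxt_neq_at_black fb_black[OF d0 black] by metis
qed

lemma fw_distinct:
  assumes min: "minimal M n bb" and d0: "d0 \<in> face_starts M a0"
    and j: "j1 < fdeg M d0" "j2 < fdeg M d0" "j1 \<noteq> j2"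
  shows "fw M d0 j1 \<noteq> fw M d0 j2"
proof
  assume eq: "fw M d0 j1 = fw M d0 j2"
  have d0D: "d0 \<in> D" "d0 \<notin> outer_face M a0" "src M d0 \<in> blacks M"
    using face_starts_D[OF d0] by auto
  have "phi.period d0 = 2 * fdeg M d0"
    using card_face_orbit[OF d0D(1,3)] phi.card_cycle_of[OF d0D(1)] face_orbit_eq_cycle_of by metis
  then have "(phi M ^^ (2*j1)) d0 \<noteq> (phi M ^^ (2*j2)) d0"
    using phi.inj_on_funpow_period[OF d0D(1)] j unfolding inj_on_def by fastforce
  moreover have "(phi M ^^ (2*j1)) d0 = (phi M ^^ (2*j2)) d0"
    using eq fw_white[OF d0D(1,3)]
    by (intro inner_face_white_corner_unique[OF min d0D(1,2)])
      (simp_all add: face_orbit_eq_cycle_of funpow_in_cycle_of fw_def)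
  ultimately show False by contradiction
qed

lemma black_corners_of_face2:
  assumes d: "d \<in> face_starts M a0" and f2: "fdeg M d = 2" and b: "b = fb M d 0 \<or> b = fb M d 1"
  obtains e1 e2 where "e1 \<in> darts_at M b" "e2 \<in> darts_at M b" "e1 \<noteq> e2"
    "src M (a e1) = fw M d 0" "src M (a e2) = fw M d 1"
proof -
  have dD: "d \<in> D" and black: "src M d \<in> blacks M" using face_starts_D[OF d] by auto
  have p4: "(phi M ^^ 4) d = d" using card_face_orbit(2)[OF dD black] f2 by simp
  show ?thesis
  proof (cases "b = fb M d 0")
    case True
    have "fb M d 2 = fb M d 0" unfolding fb_def using p4 by simp
    moreover have "(phi M ^^ (2 * Suc 1)) d = d" using p4 by (simp add: numeral_eq_Suc)
    ultimately show ?thesis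
      using that[of d "a ((phi M ^^ (2*1+1)) d)"] True
        dart_fb_to_fw[OF dD, of 0] dart_fb_Suc_to_fw[OF dD, of 1]
        darts_fb_Suc_distinct[OF dD black, of 1]
      by (simp add: numeral_eq_Suc)
  next
    case False
    then show ?thesis
      using that[of "a ((phi M ^^ (2*0+1)) d)" "(phi M ^^ (2*1)) d"] b
        dart_fb_Suc_to_fw[OF dD, of 0] dart_fb_to_fw[OF dD, of 1]
        darts_fb_Suc_distinct[OF dD black, of 0]
      by simp
  qed
qed

end


lemma tri_mem_bounds: "tri i k A \<Longrightarrow> (x, y, z) \<in> A \<Longrightarrow> i \<le> x \<and> x < y \<and> y < z \<and> z \<le> k"
  by (induction arbitrary: x y z rule: tri.induct) fastforce+

locale tcd_section = btb_graph M n wb bb a0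
  for M :: "('v, 'd) bmap" and n :: nat and wb bb :: "nat \<Rightarrow> 'v" and a0 :: 'd +
  fixes T :: "'v \<Rightarrow> (complex ^ 'n) set" and H :: "(complex ^ 'n) set"
  assumes minimal_G: "minimal M n bb" and tcd_map_T: "tcd_map M n bb T"
    and one_generic_T: "one_generic M n wb a0 T" and generic_H: "generic_hyperplane M T H"
begin

lemma ppoint_T: "w \<in> whites M \<Longrightarrow> ppoint (T w)" using tcd_map_T unfolding tcd_map_def by auto

lemma src_opp_mem_white_nbrs: "e \<in> darts_at M b \<Longrightarrow> src M (a e) \<in> white_nbrs M b"
  unfolding white_nbrs_def by blast

lemma tcd_black_line:
  assumes bB: "b \<in> blacks M" and nb: "b \<notin> bb ` {..<n}"
    and e1: "e1 \<in> darts_at M b" and e2: "e2 \<in> darts_at M b" and e12: "e1 \<noteq> e2"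
  shows "T (src M (a e1)) \<noteq> T (src M (a e2)) \<and>
    (\<forall>w \<in> white_nbrs M b. T w \<subseteq> vec.span (T (src M (a e1)) \<union> T (src M (a e2))))"
proof -
  have dg: "card (darts_at M b) = 3" using degree_black[OF bB nb] unfolding degree_def .
  have "card (darts_at M b - {e1, e2}) = 1"
    using dg e1 e2 e12 finite_darts_at by (simp add: card_Diff_subset)
  then obtain e3 where e3: "e3 \<in> darts_at M b" "e3 \<noteq> e1" "e3 \<noteq> e2"
    by (metis One_nat_def card_eq_SucD DiffD1 DiffD2 insertCI)
  have all: "darts_at M b = {e1, e2, e3}"
    using card_subset_eq[OF finite_darts_at, of "{e1, e2, e3}"] e1 e2 e3 e12 dg by auto
  have Gb: "b \<in> G_blacks M n bb" unfolding G_blacks_def using bB nb by simp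
  let ?x = "src M (a e1)" and ?y = "src M (a e2)" and ?z = "src M (a e3)"
  have all3: "\<And>d1 d2 d3. d1 \<in> darts_at M b \<Longrightarrow> d2 \<in> darts_at M b \<Longrightarrow> d3 \<in> darts_at M b
      \<Longrightarrow> d1 \<noteq> d2 \<and> d2 \<noteq> d3 \<and> d1 \<noteq> d3
      \<Longrightarrow> tcd_triple (T (src M (a d1))) (T (src M (a d2))) (T (src M (a d3)))"
    using tcd_map_T Gb unfolding tcd_map_def by blast
  have tt: "tcd_triple (T ?x) (T ?y) (T ?z)"
    by (rule all3[OF e1 e2 e3(1)]) (use e3 e12 in auto)
  then obtain L where L: "pline L" "T ?x \<subseteq> L" "T ?y \<subseteq> L" "T ?z \<subseteq> L"
    and pp: "ppoint (T ?x)" "ppoint (T ?y)" and ne: "T ?x \<noteq> T ?y"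
    unfolding tcd_triple_def collinear3_def by blast
  have sL: "vec.subspace L" "vec.dim L = 2" using L(1) unfolding pline_def by auto
  have eqL: "vec.span (T ?x \<union> T ?y) = L" using span_two_points_eq_line[OF sL pp ne L(2) L(3)] .
  have "white_nbrs M b = {?x, ?y, ?z}" unfolding white_nbrs_def all by auto
  then show ?thesis using ne eqL L by auto
qed

lemma white_nbrs_bb:
  assumes bB: "b \<in> bb ` {..<n}"
    and e1: "e1 \<in> darts_at M b" and e2: "e2 \<in> darts_at M b" and e12: "e1 \<noteq> e2"
  shows "white_nbrs M b = {src M (a e1), src M (a e2)}"
proof -
  have dg: "card (darts_at M b) = 2" using degree_bb bB unfolding degree_def by auto
  have all: "darts_at M b = {e1, e2}"
    using card_subset_eq[OF finite_darts_at, of "{e1, e2}"] e1 e2 e12 dg by auto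
  then show ?thesis unfolding white_nbrs_def by auto
qed

lemma span_white_nbrs:
  assumes bB: "b \<in> blacks M" and e1: "e1 \<in> darts_at M b" and e2: "e2 \<in> darts_at M b"
    and e12: "e1 \<noteq> e2" and ne: "T (src M (a e1)) \<noteq> T (src M (a e2))"
  shows "vec.span (\<Union>w\<in>white_nbrs M b. T w) = vec.span (T (src M (a e1)) \<union> T (src M (a e2)))"
proof
  let ?x = "src M (a e1)" and ?y = "src M (a e2)"
  have "T ?x \<union> T ?y \<subseteq> (\<Union>w\<in>white_nbrs M b. T w)"
    using src_opp_mem_white_nbrs[OF e1] src_opp_mem_white_nbrs[OF e2] by blast
  then show "vec.span (T ?x \<union> T ?y) \<subseteq> vec.span (\<Union>w\<in>white_nbrs M b. T w)" by (rule vec.span_mono)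
  have "T w \<subseteq> vec.span (T ?x \<union> T ?y)" if "w \<in> white_nbrs M b" for w
  proof (cases "b \<in> bb ` {..<n}")
    case True
    then have "w = ?x \<or> w = ?y" using white_nbrs_bb[OF True e1 e2 e12] that by auto
    then show ?thesis using vec.span_superset by blast
  next
    case False
    then show ?thesis using tcd_black_line[OF bB False e1 e2 e12] that by blast
  qed
  then show "vec.span (\<Union>w\<in>white_nbrs M b. T w) \<subseteq> vec.span (T ?x \<union> T ?y)"
    by (intro vec.span_minimal) auto
qed

lemma T_white_nbrs_neq:
  assumes b: "b \<in> blacks M" and e: "e1 \<in> darts_at M b" "e2 \<in> darts_at M b" "e1 \<noteq> e2"
    and dim: "vec.dim (vec.span (\<Union>w\<in>white_nbrs M b. T w)) = 2"
  shows "T (src M (a e1)) \<noteq> T (src M (a e2))"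
proof (cases "b \<in> bb ` {..<n}")
  case True
  show ?thesis
  proof
    assume eq: "T (src M (a e1)) = T (src M (a e2))"
    have "ppoint (T (src M (a e1)))" using ppoint_T src_opp_white[OF b e(1)] by blast
    moreover have "vec.span (\<Union>w\<in>white_nbrs M b. T w) = vec.span (T (src M (a e1)))"
      using white_nbrs_bb[OF True e] eq by simp
    ultimately show False using dim unfolding ppoint_def by simp
  qed
next
  case False
  then show ?thesis using tcd_black_line[OF b False e] by blast
qed

lemma span_white_nbrs_merge:
  assumes L: "vec.dim \<Lambda> = 2"
    and b1: "b1 \<in> blacks M" "vec.span (\<Union>w\<in>white_nbrs M b1. T w) = \<Lambda>"
    and merge: "(b1, b2) \<in> merge_rel M a0 \<union> (merge_rel M a0)\<inverse>"
  shows "b2 \<in> blacks M \<and> vec.span (\<Union>w\<in>white_nbrs M b2. T w) = \<Lambda>"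
proof -
  obtain d where d: "d \<in> face_starts M a0" "fdeg M d = 2"
    and b12: "b1 = fb M d 0 \<or> b1 = fb M d 1" "b2 = fb M d 0 \<or> b2 = fb M d 1"
    using merge unfolding merge_rel_def by blast
  obtain e1 e2 where e: "e1 \<in> darts_at M b1" "e2 \<in> darts_at M b1" "e1 \<noteq> e2"
    "src M (a e1) = fw M d 0" "src M (a e2) = fw M d 1"
    by (rule black_corners_of_face2[OF d b12(1)])
  obtain f1 f2 where f: "f1 \<in> darts_at M b2" "f2 \<in> darts_at M b2" "f1 \<noteq> f2"
    "src M (a f1) = fw M d 0" "src M (a f2) = fw M d 1"
    by (rule black_corners_of_face2[OF d b12(2)])
  have b2: "b2 \<in> blacks M" using b12(2) fb_black face_starts_D[OF d(1)] by auto
  have "T (fw M d 0) \<noteq> T (fw M d 1)"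
    using T_white_nbrs_neq[OF b1(1) e(1-3)] e(4,5) b1(2) L by simp
  then show ?thesis
    using span_white_nbrs[OF b1(1) e(1-3)] span_white_nbrs[OF b2 f(1-3)] e(4,5) f(4,5) b1(2) b2
    by simp
qed

lemma span_merged_faces:
  assumes b0: "b0 \<in> blacks M" and dim: "vec.dim (vec.span (\<Union>w\<in>white_nbrs M b0. T w)) = 2"
  shows "vec.span (\<Union>w\<in>merged_faces M a0 b0. T w) = vec.span (\<Union>w\<in>white_nbrs M b0. T w)"
proof
  define \<Lambda> where "\<Lambda> = vec.span (\<Union>w\<in>white_nbrs M b0. T w)"
  have merged: "b' \<in> blacks M \<and> vec.span (\<Union>w\<in>white_nbrs M b'. T w) = \<Lambda>"
    if "(b0, b') \<in> (merge_rel M a0 \<union> (merge_rel M a0)\<inverse>)\<^sup>*" for b'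
    using that
  proof (induction rule: rtrancl_induct)
    case (step u v)
    then show ?case using span_white_nbrs_merge dim \<Lambda>_def by blast
  qed (simp add: b0 \<Lambda>_def)
  have "T w \<subseteq> \<Lambda>" if w: "w \<in> merged_faces M a0 b0" for w
  proof -
    obtain b' where b': "(b0, b') \<in> (merge_rel M a0 \<union> (merge_rel M a0)\<inverse>)\<^sup>*" "w \<in> white_nbrs M b'"
      using w unfolding merged_faces_def by auto
    then show ?thesis using merged[OF b'(1)] vec.span_superset by blast
  qed
  then show "vec.span (\<Union>w\<in>merged_faces M a0 b0. T w) \<subseteq> \<Lambda>"
    unfolding \<Lambda>_def by (intro vec.span_minimal) auto
  have "white_nbrs M b0 \<subseteq> merged_faces M a0 b0" unfolding merged_faces_def by auto
  then show "\<Lambda> \<subseteq> vec.span (\<Union>w\<in>merged_faces M a0 b0. T w)"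
    unfolding \<Lambda>_def by (intro vec.span_mono) blast
qed

lemma dim_span_three_fw:
  assumes fs: "d0 \<in> face_starts M a0" and j: "j1 < fdeg M d0" "j2 < fdeg M d0" "j3 < fdeg M d0"
    and d: "j1 \<noteq> j2" "j2 \<noteq> j3" "j1 \<noteq> j3"
  shows "vec.dim (vec.span (T (fw M d0 j1) \<union> T (fw M d0 j2) \<union> T (fw M d0 j3))) = 3"
proof -
  have d0D: "d0 \<in> D" and d0n: "d0 \<notin> outer_face M a0" and bl: "src M d0 \<in> blacks M"
    using face_starts_D[OF fs] by auto
  have inner: "face_orbit M d0 \<in> inner_faces M a0"
    using d0D d0n self_in_cycle_of[of d0 "phi M"]
    unfolding inner_faces_def faces_def outer_face_def face_orbit_eq_cycle_of by auto
  have fwF: "fw M d0 j \<in> face_whites M (face_orbit M d0)" for j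
    using funpow_in_cycle_of[of "2*j+1" "phi M" d0] fw_white[OF d0D bl, of j]
    unfolding face_whites_def face_orbit_eq_cycle_of fw_def by blast
  have dist: "fw M d0 j1 \<noteq> fw M d0 j2" "fw M d0 j2 \<noteq> fw M d0 j3" "fw M d0 j1 \<noteq> fw M d0 j3"
    using fw_distinct[OF minimal_G fs] j d by auto
  show ?thesis using one_generic_T inner fwF dist unfolding one_generic_def by blast
qed

lemma T_fw_neq:
  assumes fs: "d0 \<in> face_starts M a0" and k3: "3 \<le> fdeg M d0"
    and j: "j1 < fdeg M d0" "j2 < fdeg M d0" and d: "j1 \<noteq> j2"
  shows "T (fw M d0 j1) \<noteq> T (fw M d0 j2)"
proof -
  have d0D: "d0 \<in> D" and bl: "src M d0 \<in> blacks M" using face_starts_D[OF fs] by auto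
  have "\<exists>r::nat. r < 3 \<and> r \<noteq> j1 \<and> r \<noteq> j2" by presburger
  then obtain r where r: "r < 3" "r \<noteq> j1" "r \<noteq> j2" by blast
  have "vec.dim (vec.span (T (fw M d0 j1) \<union> T (fw M d0 j2) \<union> T (fw M d0 r))) = 3"
    using dim_span_three_fw[OF fs j] r k3 d by auto
  then show ?thesis using neq_if_dim_span_three ppoint_T fw_white[OF d0D bl] by metis
qed

lemma span_merged_faces_corner:
  assumes b: "b \<in> blacks M" and e: "e1 \<in> darts_at M b" "e2 \<in> darts_at M b" "e1 \<noteq> e2"
    and ne: "T (src M (a e1)) \<noteq> T (src M (a e2))"
  shows "vec.span (\<Union>w\<in>merged_faces M a0 b. T w) = vec.span (T (src M (a e1)) \<union> T (src M (a e2)))"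
proof -
  have "ppoint (T (src M (a e1)))" "ppoint (T (src M (a e2)))"
    using ppoint_T src_opp_white[OF b] e by blast+
  then show ?thesis
    using span_merged_faces[OF b] dim_span_two_points[OF _ _ ne] span_white_nbrs[OF b e ne] by simp
qed

lemma span_side_faces:
  assumes d0: "d0 \<in> face_starts M a0" and k3: "3 \<le> fdeg M d0" and pq: "p < q" "q \<le> fdeg M d0 - 1"
  shows "vec.span (\<Union>w\<in>side_faces M a0 d0 p q. T w) = vec.span (T (fw M d0 p) \<union> T (fw M d0 q))"
proof -
  have d0D: "d0 \<in> D" and black: "src M d0 \<in> blacks M" using face_starts_D[OF d0] by auto
  have ne: "T (fw M d0 p) \<noteq> T (fw M d0 q)" using T_fw_neq[OF d0 k3] pq k3 by simp
  consider "q = Suc p" | "q \<noteq> Suc p" "p = 0" "q = fdeg M d0 - 1"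
    | "q \<noteq> Suc p" "\<not> (p = 0 \<and> q = fdeg M d0 - 1)"
    by blast
  then show ?thesis
  proof cases
    case 1
    then show ?thesis
      using span_merged_faces_corner[OF fb_black[OF d0D black] dart_fb_Suc_to_fw(1)[OF d0D, of p]
          dart_fb_to_fw(1)[OF d0D, of "Suc p"]] dart_fb_Suc_to_fw(2)[OF d0D, of p]
        dart_fb_to_fw(2)[OF d0D, of "Suc p"] darts_fb_Suc_distinct[OF d0D black, of p] ne
      unfolding side_faces_def by (simp add: eq_commute)
  next
    case 2
    let ?k = "fdeg M d0" and ?e = "a ((phi M ^^ (2 * (fdeg M d0 - 1) + 1)) d0)"
    have k: "(phi M ^^ (2 * ?k)) d0 = d0" "Suc (?k - 1) = ?k"
      using card_face_orbit(2)[OF d0D black] k3 by simp_all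
    then have "fb M d0 (Suc (?k - 1)) = fb M d0 0" unfolding fb_def by simp
    then have "?e \<in> darts_at M (fb M d0 0)" using dart_fb_Suc_to_fw(1)[OF d0D, of "?k - 1"] by simp
    then show ?thesis
      using span_merged_faces_corner[OF fb_black[OF d0D black] dart_fb_to_fw(1)[OF d0D, of 0]]
        dart_fb_to_fw(2)[OF d0D, of 0] dart_fb_Suc_to_fw(2)[OF d0D, of "?k - 1"]
        darts_fb_Suc_distinct[OF d0D black, of "?k - 1"] k ne 2
      unfolding side_faces_def by simp
  next
    case 3
    then show ?thesis unfolding side_faces_def by auto
  qed
qed

lemma tcd_triple_section:
  assumes ch: "sigma_choice M a0 R tc" and d0R: "d0 \<in> R" and t: "(x, y, z) \<in> tc d0"
  shows "tcd_triple (section_pt T H (side_faces M a0 d0 x y))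
                    (section_pt T H (side_faces M a0 d0 y z))
                    (section_pt T H (side_faces M a0 d0 x z))"
proof -
  have fs: "d0 \<in> face_starts M a0" and k3: "3 \<le> fdeg M d0" and tr: "tri 0 (fdeg M d0 - 1) (tc d0)"
    using ch d0R unfolding sigma_choice_def by auto
  have d0D: "d0 \<in> D" and bl: "src M d0 \<in> blacks M" using face_starts_D[OF fs] by auto
  have b: "x < y" "y < z" "z \<le> fdeg M d0 - 1" using tri_mem_bounds[OF tr t] by auto
  have H: "hyperplane H" and nH: "\<And>w. w \<in> whites M \<Longrightarrow> \<not> T w \<subseteq> H"
    using generic_H unfolding generic_hyperplane_def by auto
  let ?X = "T (fw M d0 x)" and ?Y = "T (fw M d0 y)" and ?Z = "T (fw M d0 z)"
  have pp: "ppoint ?X" "ppoint ?Y" "ppoint ?Z" using ppoint_T fw_white[OF d0D bl] by auto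
  have nn: "\<not> ?X \<subseteq> H" "\<not> ?Y \<subseteq> H" "\<not> ?Z \<subseteq> H" using nH fw_white[OF d0D bl] by auto
  have d3: "vec.dim (vec.span (?X \<union> ?Y \<union> ?Z)) = 3" using dim_span_three_fw[OF fs] b k3 by simp
  have s1: "section_pt T H (side_faces M a0 d0 x y) = vec.span (?X \<union> ?Y) \<inter> H"
    unfolding section_pt_def using span_side_faces[OF fs k3] b by simp
  have s2: "section_pt T H (side_faces M a0 d0 y z) = vec.span (?Y \<union> ?Z) \<inter> H"
    unfolding section_pt_def using span_side_faces[OF fs k3] b by simp
  have s3: "section_pt T H (side_faces M a0 d0 x z) = vec.span (?X \<union> ?Z) \<inter> H"
    unfolding section_pt_def using span_side_faces[OF fs k3] b by simp
  show ?thesis unfolding s1 s2 s3 by (rule tcd_triple_hyperplane_sections[OF H pp d3 nn])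
qed

end


theorem proposition8p5:
  fixes M :: "('v, 'd) bmap"
    and n :: nat and wb bb :: "nat \<Rightarrow> 'v" and a0 :: 'd
    and T :: "'v \<Rightarrow> (complex ^ 'n) set" and H :: "(complex ^ 'n) set"
    and R :: "'d set" and tc :: "'d \<Rightarrow> (nat \<times> nat \<times> nat) set"
  assumes d_ge_2: "CARD('n) \<ge> 3"
    and G: "btb_int M n wb bb a0"
    and min: "minimal M n bb"
    and tcd: "tcd_map M n bb T"
    and gen1: "one_generic M n wb a0 T"
    and genH: "generic_hyperplane M T H"
    and choice: "sigma_choice M a0 R tc"
  shows "\<forall>d0\<in>R. \<forall>(x, y, z)\<in>tc d0.
           tcd_triple (section_pt T H (side_faces M a0 d0 x y))
                      (section_pt T H (side_faces M a0 d0 y z))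
                      (section_pt T H (side_faces M a0 d0 x z))"
proof -
  interpret tcd_section M n wb bb a0 T H
    using G min tcd gen1 genH by unfold_locales
  show ?thesis using tcd_triple_section[OF choice] by blast
qed

end
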